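(* Let $N,k\ge 1$ be integers, write $z=(x,y)\in\mathbb{R}^{N}\times\mathbb{R}^{k}=\mathbb{R}^{N+k}$, and let $\Delta_{\mathcal{G}}=\Delta_x+|x|^2\Delta_y$ be the Grushin operator. Let $p>1$ and let $u_0\in L^1(\mathbb{R}^{N+k})$ satisfy $\int_{\mathbb{R}^{N+k}}u_0(z)\,dz>0$. If $$p\le 1+\frac{2}{N+2k},$$ then the problem $$u_t-\Delta_{\mathcal{G}}u=|u|^{p-1}u\ \text{ in } \mathbb{R}^{N+k}\times(0,\infty),\qquad u(z,0)=u_0(z),$$ admits no global nonnegative weak solution.
   Context: Here $\Delta_x,\Delta_y$ are the Euclidean Laplacians in $x\in\mathbb{R}^N$ and $y\in\mathbb{R}^k$. For $T>0$, a function $u$ is a weak solution on $[0,T]$ if $u,\ |u|^{p-1}u\in L^1_{\mathrm{loc}}(\mathbb{R}^{N+k}\times(0,T))$ and for every compactly supported $\varphi\in C^{2,1}(\mathbb{R}^{N+k}\times[0,T])$ with $\varphi(\cdot,T)=0$, $$-\int_{\mathbb{R}^{N+k}}u_0(z)\varphi(z,0)\,dz=\int_0^T\!\!\int_{\mathbb{R}^{N+k}}|u|^{p-1}u\,\varphi\,dz\,dt+\int_0^T\!\!\int_{\mathbb{R}^{N+k}}u\,\Delta_{\mathcal{G}}\varphi\,dz\,dt+\int_0^T\!\!\int_{\mathbb{R}^{N+k}}u\,\varphi_t\,dz\,dt.$$ A global weak solution is a weak solution on $[0,T]$ for every $T>0$. *)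

theory Defs
  imports "HOL-Analysis.Analysis"
begin

text \<open>Points z = (x,y) of R^(N+k) are modelled as pairs in real^'n \<times> real^'k,
  with N = CARD('n) and k = CARD('k). Space-time points are ((x,y),t).\<close>

type_synonym ('n,'k) pt = "(real^'n) \<times> (real^'k)"

definition pd :: "('a::real_normed_vector \<Rightarrow> real) \<Rightarrow> 'a \<Rightarrow> 'a \<Rightarrow> real" where
  "pd f v z = deriv (\<lambda>s. f (z + s *\<^sub>R v)) 0"

definition grushin :: "(('n::finite,'k::finite) pt \<Rightarrow> real) \<Rightarrow> ('n,'k) pt \<Rightarrow> real" where
  "grushin f z =
     (\<Sum>i\<in>(Basis :: (real^'n) set). pd (pd f (i, 0)) (i, 0) z)
     + (norm (fst z))\<^sup>2 * (\<Sum>j\<in>(Basis :: (real^'k) set). pd (pd f (0, j)) (0, j) z)"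

definition dtime :: "real \<Rightarrow> ('z \<Rightarrow> real \<Rightarrow> real) \<Rightarrow> 'z \<Rightarrow> real \<Rightarrow> real" where
  "dtime T \<phi> z t = vector_derivative (\<lambda>s. \<phi> z s) (at t within {0..T})"

definition test_fun :: "real \<Rightarrow> ('z::euclidean_space \<Rightarrow> real \<Rightarrow> real) \<Rightarrow> bool" where
  "test_fun T \<phi> \<longleftrightarrow>
     (\<exists>K. compact K \<and> (\<forall>z. \<forall>t\<in>{0..T}. \<phi> z t \<noteq> 0 \<longrightarrow> z \<in> K)) \<and>
     (\<forall>z. \<forall>t\<in>{0..T}. \<forall>i\<in>Basis.
        (\<lambda>s. \<phi> (z + s *\<^sub>R i) t) field_differentiable (at 0)) \<and>
     (\<forall>z. \<forall>t\<in>{0..T}. \<forall>i\<in>Basis. \<forall>j\<in>Basis.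
        (\<lambda>s. pd (\<lambda>w. \<phi> w t) i (z + s *\<^sub>R j)) field_differentiable (at 0)) \<and>
     (\<forall>z. \<forall>t\<in>{0..T}. ((\<lambda>s. \<phi> z s) has_real_derivative dtime T \<phi> z t) (at t within {0..T})) \<and>
     continuous_on (UNIV \<times> {0..T}) (\<lambda>(z,t). \<phi> z t) \<and>
     (\<forall>i\<in>Basis. continuous_on (UNIV \<times> {0..T}) (\<lambda>(z,t). pd (\<lambda>w. \<phi> w t) i z)) \<and>
     (\<forall>i\<in>Basis. \<forall>j\<in>Basis.
        continuous_on (UNIV \<times> {0..T}) (\<lambda>(z,t). pd (pd (\<lambda>w. \<phi> w t) i) j z)) \<and>
     continuous_on (UNIV \<times> {0..T}) (\<lambda>(z,t). dtime T \<phi> z t) \<and>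
     (\<forall>z. \<phi> z T = 0)"

definition L1_loc :: "('a::euclidean_space) set \<Rightarrow> ('a \<Rightarrow> real) \<Rightarrow> bool" where
  "L1_loc S f \<longleftrightarrow> (\<forall>K. compact K \<and> K \<subseteq> S \<longrightarrow> set_integrable lborel K f)"

definition weak_solution ::
  "real \<Rightarrow> real \<Rightarrow> (('n::finite,'k::finite) pt \<Rightarrow> real) \<Rightarrow> (('n,'k) pt \<Rightarrow> real \<Rightarrow> real) \<Rightarrow> bool" where
  "weak_solution T p u0 u \<longleftrightarrow>
     L1_loc (UNIV \<times> {0<..<T}) (\<lambda>(z,t). u z t) \<and>
     L1_loc (UNIV \<times> {0<..<T}) (\<lambda>(z,t). \<bar>u z t\<bar> powr (p - 1) * u z t) \<and>
     (\<forall>\<phi>. test_fun T \<phi> \<longrightarrow>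
        - (\<integral>z. u0 z * \<phi> z 0 \<partial>lborel)
        = (LINT w : UNIV \<times> {0<..<T} | lborel. \<bar>u (fst w) (snd w)\<bar> powr (p - 1) * u (fst w) (snd w) * \<phi> (fst w) (snd w))
        + (LINT w : UNIV \<times> {0<..<T} | lborel. u (fst w) (snd w) * grushin (\<lambda>z. \<phi> z (snd w)) (fst w))
        + (LINT w : UNIV \<times> {0<..<T} | lborel. u (fst w) (snd w) * dtime T \<phi> (fst w) (snd w)))"

definition global_weak_solution ::
  "real \<Rightarrow> (('n::finite,'k::finite) pt \<Rightarrow> real) \<Rightarrow> (('n,'k) pt \<Rightarrow> real \<Rightarrow> real) \<Rightarrow> bool" where
  "global_weak_solution p u0 u \<longleftrightarrow> (\<forall>T>0. weak_solution T p u0 u)"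

end

(* Test the weak formulation with phi(z,t) = c(t) Theta_R(z)^m, where Theta_R is a product of
   cutoffs at scale R in x and R^2 in y and c is a cutoff at scale R^2 in t.  In this Grushin scaling
   Delta_G phi and phi_t are bounded by R^(-2) c Theta_R^(m-2), and Young's inequality absorbs them
   into the source term int u^p phi, up to a remainder of order R^(N+2k+2-2p/(p-1)); this is bounded
   uniformly in R exactly when p <= 1 + 2/(N+2k).
   Because u is only locally integrable on t > 0, one first also cuts off near t = 0; the resulting
   bound, uniform in R, and Fatou's lemma give u^p in L^1.  Then the derivative terms only
   charge u^p outside the box where phi is flat, which tends to 0 as R -> infinity, and the weak
   formulation at t = 0 yields int u0 <= C delta^(-1/(p-1)) for every delta > 0, so int u0 <= 0. *)

theory Submission
  imports Defs
begin

section \<open>A one-dimensional cutoff\<close>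

definition pos_pow :: "nat \<Rightarrow> real \<Rightarrow> real" where "pos_pow n r = (max 0 r) ^ n"

lemma pos_pow_has_derivative_0:
  assumes "n \<ge> 2"
  shows "(pos_pow n has_real_derivative 0) (at 0)"
proof -
  have "((\<lambda>h. (pos_pow n (0 + h) - pos_pow n 0) / h) \<longlongrightarrow> 0) (at 0)"
  proof (rule tendsto_sandwich[where f="\<lambda>h. - \<bar>h\<bar>" and h="\<lambda>h. \<bar>h\<bar>"])
    have b: "\<bar>(pos_pow n h - pos_pow n 0) / h\<bar> \<le> \<bar>h\<bar>" if "\<bar>h\<bar> \<le> 1" for h
    proof (cases "h > 0")
      case True
      have "(pos_pow n h - pos_pow n 0) / h = h ^ (n - 1)"
        using True assms by (simp add: pos_pow_def power_eq_if)
      moreover have "h ^ (n-1) \<le> h ^ 1" using True that assms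
        by (intro power_decreasing) auto
      ultimately show ?thesis using True by simp
    next
      case False
      then show ?thesis using assms by (simp add: pos_pow_def max_def)
    qed
    have ev: "\<forall>\<^sub>F h in at (0::real). \<bar>h\<bar> < 1"
      using eventually_at_ball[of 1 0 UNIV] by (simp, rule eventually_mono) (auto simp: dist_real_def)
    show "\<forall>\<^sub>F h in at 0. - \<bar>h\<bar> \<le> (pos_pow n (0 + h) - pos_pow n 0) / h"
      using ev by (rule eventually_mono) (use b in \<open>smt (verit, best) add_0\<close>)
    show "\<forall>\<^sub>F h in at 0. (pos_pow n (0 + h) - pos_pow n 0) / h \<le> \<bar>h\<bar>"
      using ev by (rule eventually_mono) (use b in \<open>smt (verit, best) add_0\<close>)
    show "((\<lambda>h. - \<bar>h\<bar>) \<longlongrightarrow> 0) (at (0::real))"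
      by (auto intro!: tendsto_eq_intros)
    show "((\<lambda>h. \<bar>h\<bar>) \<longlongrightarrow> 0) (at (0::real))"
      by (auto intro!: tendsto_eq_intros)
  qed
  then show ?thesis by (simp add: DERIV_def)
qed

lemma has_real_derivative_pos_pow:
  assumes "n \<ge> 2"
  shows "(pos_pow n has_real_derivative (real n * pos_pow (n - 1) r)) (at r)"
proof (cases "r = 0")
  case True
  then show ?thesis using pos_pow_has_derivative_0[OF assms] assms by (simp add: pos_pow_def zero_power)
next
  case False
  show ?thesis
  proof (cases "r > 0")
    case True
    have "((\<lambda>s. s ^ n) has_real_derivative (real n * pos_pow (n - 1) r)) (at r)"
      using True by (auto intro!: derivative_eq_intros simp: pos_pow_def)
    then show ?thesis
      by (rule has_field_derivative_transform_within_open[where S="{0<..}"])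
         (use True in \<open>auto simp: pos_pow_def\<close>)
  next
    case False
    with \<open>r \<noteq> 0\<close> have r: "r < 0" by simp
    have "((\<lambda>s. 0) has_real_derivative (real n * pos_pow (n - 1) r)) (at r)"
      using r assms by (auto intro!: derivative_eq_intros simp: pos_pow_def)
    then show ?thesis
      by (rule has_field_derivative_transform_within_open[where S="{..<0}"])
         (use r assms in \<open>auto simp: pos_pow_def\<close>)
  qed
qed

lemma pos_pow_nonneg: "pos_pow n r \<ge> 0"
  by (simp add: pos_pow_def)

lemma continuous_on_pos_pow [continuous_intros]:
  "continuous_on S f \<Longrightarrow> continuous_on S (\<lambda>x. pos_pow n (f x))"
  unfolding pos_pow_def by (intro continuous_intros)

definition tail_cube :: "real \<Rightarrow> real" where
  "tail_cube s = pos_pow 3 (s - 1) + pos_pow 3 (- s - 1)"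

definition tail_cube_d1 :: "real \<Rightarrow> real" where
  "tail_cube_d1 s = 3 * pos_pow 2 (s - 1) - 3 * pos_pow 2 (- s - 1)"

definition tail_cube_d2 :: "real \<Rightarrow> real" where
  "tail_cube_d2 s = 6 * pos_pow 1 (s - 1) + 6 * pos_pow 1 (- s - 1)"

definition cutoff :: "real \<Rightarrow> real" where
  "cutoff s = max 0 (1 - tail_cube s)"

text \<open>This is \<open>cutoff s ^ m\<close> (see \<open>cutoff_pow_eq\<close>), written so that
  its first two derivatives come from the chain rule; \<open>pos_pow m\<close> is twice
  differentiable for \<open>m \<ge> 3\<close>.\<close>

definition cutoff_pow :: "nat \<Rightarrow> real \<Rightarrow> real" where
  "cutoff_pow m s = pos_pow m (1 - tail_cube s)"

definition cutoff_pow_d1 :: "nat \<Rightarrow> real \<Rightarrow> real" where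
  "cutoff_pow_d1 m s = - (real m * pos_pow (m - 1) (1 - tail_cube s) * tail_cube_d1 s)"

definition cutoff_pow_d2 :: "nat \<Rightarrow> real \<Rightarrow> real" where
  "cutoff_pow_d2 m s = real m * real (m - 1) * pos_pow (m - 2) (1 - tail_cube s) * (tail_cube_d1 s)\<^sup>2
     - real m * pos_pow (m - 1) (1 - tail_cube s) * tail_cube_d2 s"

lemma DERIV_pos_pow_comp [derivative_intros]:
  "n \<ge> 2 \<Longrightarrow> (f has_real_derivative f') (at x) \<Longrightarrow>
   ((\<lambda>x. pos_pow n (f x)) has_real_derivative real n * pos_pow (n - 1) (f x) * f') (at x)"
  using DERIV_chain2[OF has_real_derivative_pos_pow] by blast

lemma tail_cube_has_derivative: "(tail_cube has_real_derivative tail_cube_d1 s) (at s)"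
  unfolding tail_cube_def[abs_def] tail_cube_d1_def
  by (rule derivative_eq_intros refl | simp)+

lemma tail_cube_d1_has_derivative: "(tail_cube_d1 has_real_derivative tail_cube_d2 s) (at s)"
  unfolding tail_cube_d1_def[abs_def] tail_cube_d2_def
  by (rule derivative_eq_intros refl | simp)+

lemma cutoff_pow_has_derivative:
  "m \<ge> 3 \<Longrightarrow> (cutoff_pow m has_real_derivative cutoff_pow_d1 m s) (at s)"
  unfolding cutoff_pow_def[abs_def] cutoff_pow_d1_def
  by (rule derivative_eq_intros refl tail_cube_has_derivative | simp)+

lemma cutoff_pow_d1_has_derivative:
  "m \<ge> 3 \<Longrightarrow> (cutoff_pow_d1 m has_real_derivative cutoff_pow_d2 m s) (at s)"
  unfolding cutoff_pow_d1_def[abs_def] cutoff_pow_d2_def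
  by (rule derivative_eq_intros refl tail_cube_has_derivative tail_cube_d1_has_derivative | simp)+
     (simp add: power2_eq_square algebra_simps numeral_eq_Suc)

lemma continuous_on_tail_cube [continuous_intros]:
  "continuous_on S f \<Longrightarrow> continuous_on S (\<lambda>x. tail_cube (f x))"
  unfolding tail_cube_def by (intro continuous_intros)

lemma continuous_on_tail_cube_d1 [continuous_intros]:
  "continuous_on S f \<Longrightarrow> continuous_on S (\<lambda>x. tail_cube_d1 (f x))"
  unfolding tail_cube_d1_def by (intro continuous_intros)

lemma continuous_on_tail_cube_d2 [continuous_intros]:
  "continuous_on S f \<Longrightarrow> continuous_on S (\<lambda>x. tail_cube_d2 (f x))"
  unfolding tail_cube_d2_def by (intro continuous_intros)

lemma continuous_on_cutoff_pow [continuous_intros]: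
  "continuous_on S f \<Longrightarrow> continuous_on S (\<lambda>x. cutoff_pow m (f x))"
  unfolding cutoff_pow_def by (intro continuous_intros)

lemma continuous_on_cutoff_pow_d1 [continuous_intros]:
  "continuous_on S f \<Longrightarrow> continuous_on S (\<lambda>x. cutoff_pow_d1 m (f x))"
  unfolding cutoff_pow_d1_def by (intro continuous_intros)

lemma continuous_on_cutoff_pow_d2 [continuous_intros]:
  "continuous_on S f \<Longrightarrow> continuous_on S (\<lambda>x. cutoff_pow_d2 m (f x))"
  unfolding cutoff_pow_d2_def by (intro continuous_intros)

lemma tail_cube_nonneg: "tail_cube s \<ge> 0"
  by (simp add: tail_cube_def pos_pow_nonneg)

lemma cutoff_bounds: "0 \<le> cutoff s" "cutoff s \<le> 1"
  using tail_cube_nonneg[of s] by (auto simp: cutoff_def)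

lemma cutoff_pow_eq: "cutoff_pow m s = cutoff s ^ m"
  by (simp add: cutoff_pow_def cutoff_def pos_pow_def)

lemma cutoff_pow_bounds: "0 \<le> cutoff_pow m s" "cutoff_pow m s \<le> 1"
  using cutoff_bounds[of s] by (auto simp: cutoff_pow_eq power_le_one)

lemma tail_cube_eq_0:
  "\<bar>s\<bar> \<le> 1 \<Longrightarrow> tail_cube s = 0 \<and> tail_cube_d1 s = 0 \<and> tail_cube_d2 s = 0"
  by (auto simp: tail_cube_def tail_cube_d1_def tail_cube_d2_def pos_pow_def max_def)

lemma cutoff_pow_plateau:
  "m \<ge> 3 \<Longrightarrow> \<bar>s\<bar> \<le> 1
      \<Longrightarrow> cutoff_pow m s = 1 \<and> cutoff_pow_d1 m s = 0 \<and> cutoff_pow_d2 m s = 0"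
  using tail_cube_eq_0[of s] by (auto simp: cutoff_pow_def cutoff_pow_d1_def cutoff_pow_d2_def pos_pow_def)

lemma tail_cube_ge_1: "\<bar>s\<bar> \<ge> 2 \<Longrightarrow> tail_cube s \<ge> 1"
proof -
  assume "\<bar>s\<bar> \<ge> 2"
  then consider "s - 1 \<ge> 1" | "- s - 1 \<ge> 1" by linarith
  then show ?thesis
  proof cases
    case 1 then show ?thesis
        using pos_pow_nonneg[of 3 "-s-1"] by (simp add: tail_cube_def pos_pow_def one_le_power)
  next
    case 2 then show ?thesis
        using pos_pow_nonneg[of 3 "s-1"] by (simp add: tail_cube_def pos_pow_def one_le_power)
  qed
qed

lemma cutoff_eq_0: "\<bar>s\<bar> \<ge> 2 \<Longrightarrow> cutoff s = 0"
  using tail_cube_ge_1 by (auto simp: cutoff_def)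

lemma tail_cube_derivs_bound:
  "tail_cube s < 1
      \<Longrightarrow> \<bar>tail_cube_d1 s\<bar> \<le> 6 \<and> \<bar>tail_cube_d2 s\<bar> \<le> 12"
proof -
  assume a: "tail_cube s < 1"
  have a1: "max 0 (s - 1) < 1"
  proof (rule ccontr)
    assume "\<not> ?thesis" then have "1 \<le> pos_pow 3 (s - 1)" by (simp add: pos_pow_def one_le_power)
    then show False using a pos_pow_nonneg[of 3 "-s-1"] by (simp add: tail_cube_def)
  qed
  have a2: "max 0 (- s - 1) < 1"
  proof (rule ccontr)
    assume "\<not> ?thesis" then have "1 \<le> pos_pow 3 (- s - 1)" by (simp add: pos_pow_def one_le_power)
    then show False using a pos_pow_nonneg[of 3 "s-1"] by (simp add: tail_cube_def)
  qed
  have "pos_pow 2 (s - 1) \<le> 1" "pos_pow 2 (- s - 1) \<le> 1" "pos_pow 1 (s - 1) \<le> 1"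
      "pos_pow 1 (- s - 1) \<le> 1"
    using a1 a2 by (auto simp: pos_pow_def power_le_one)
  then show ?thesis
      using pos_pow_nonneg[of 2 "s-1"] pos_pow_nonneg[of 2 "-s-1"] pos_pow_nonneg[of 1 "s-1"]
      pos_pow_nonneg[of 1 "-s-1"]
    by (auto simp: tail_cube_d1_def tail_cube_d2_def)
qed

lemma cutoff_pow_d1_bound:
  "m \<ge> 3 \<Longrightarrow> \<bar>cutoff_pow_d1 m s\<bar> \<le> 48 * real m ^ 2 * cutoff s ^ (m - 2)"
proof -
  assume m: "m \<ge> 3"
  show ?thesis
  proof (cases "tail_cube s < 1")
    case True
    have q: "pos_pow (m - 1) (1 - tail_cube s) = cutoff s ^ (m - 1)" by (simp add: pos_pow_def cutoff_def)
    have "cutoff s ^ (m - 1) \<le> cutoff s ^ (m - 2)"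
      using cutoff_bounds[of s] m by (intro power_decreasing) auto
    moreover have "\<bar>cutoff_pow_d1 m s\<bar> = real m * cutoff s ^ (m - 1) * \<bar>tail_cube_d1 s\<bar>"
      using cutoff_bounds[of s] by (simp add: cutoff_pow_d1_def abs_mult pos_pow_def cutoff_def)
    moreover have "\<bar>tail_cube_d1 s\<bar> \<le> 6" using tail_cube_derivs_bound[OF True] by simp
    moreover have "real m \<le> real m ^ 2" using m by (simp add: power2_eq_square)
    ultimately have "\<bar>cutoff_pow_d1 m s\<bar> \<le> real m * cutoff s ^ (m - 2) * 6"
      using cutoff_bounds[of s] by (auto intro!: mult_mono)
    also have "\<dots> = (6 * real m) * cutoff s ^ (m - 2)" by simp
    also have "\<dots> \<le> (48 * real m ^ 2) * cutoff s ^ (m - 2)"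
      by (intro mult_right_mono)
        (use \<open>real m \<le> real m ^ 2\<close> in linarith, simp add: cutoff_bounds)
    finally show ?thesis .
  next
    case False
    then have "pos_pow (m - 1) (1 - tail_cube s) = 0" using m by (simp add: pos_pow_def max_def)
    then show ?thesis using cutoff_bounds[of s] by (simp add: cutoff_pow_d1_def)
  qed
qed

lemma cutoff_pow_d2_bound:
  "m \<ge> 3 \<Longrightarrow> \<bar>cutoff_pow_d2 m s\<bar> \<le> 48 * real m ^ 2 * cutoff s ^ (m - 2)"
proof -
  assume m: "m \<ge> 3"
  show ?thesis
  proof (cases "tail_cube s < 1")
    case True
    have q1: "pos_pow (m - 1) (1 - tail_cube s) = cutoff s ^ (m - 1)" by (simp add: pos_pow_def cutoff_def)
    have q2: "pos_pow (m - 2) (1 - tail_cube s) = cutoff s ^ (m - 2)" by (simp add: pos_pow_def cutoff_def)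
    have le: "cutoff s ^ (m - 1) \<le> cutoff s ^ (m - 2)"
      using cutoff_bounds[of s] m by (intro power_decreasing) auto
    have b1: "\<bar>tail_cube_d1 s\<bar> \<le> 6"
        "\<bar>tail_cube_d2 s\<bar> \<le> 12" using tail_cube_derivs_bound[OF True] by auto
    have "(tail_cube_d1 s)\<^sup>2 \<le> 36" using power_mono[OF b1(1), of 2] by simp
    have t1: "\<bar>real m * real (m - 1) * cutoff s ^ (m - 2) * (tail_cube_d1 s)\<^sup>2\<bar>
        \<le> real m * real m * cutoff s ^ (m - 2) * 36"
      using cutoff_bounds[of s] \<open>(tail_cube_d1 s)\<^sup>2 \<le> 36\<close> m
      by (simp add: abs_mult) (intro mult_mono, auto)
    have t2: "\<bar>real m * cutoff s ^ (m - 1) * tail_cube_d2 s\<bar>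
        \<le> real m * real m * cutoff s ^ (m - 2) * 12"
    proof -
      have "\<bar>real m * cutoff s ^ (m - 1) * tail_cube_d2 s\<bar>
          = real m * cutoff s ^ (m - 1) * \<bar>tail_cube_d2 s\<bar>"
        using cutoff_bounds[of s] by (simp add: abs_mult)
      also have "\<dots> \<le> real m * cutoff s ^ (m - 2) * 12"
        using le b1 cutoff_bounds[of s] by (intro mult_mono) auto
      also have "\<dots> \<le> real m * real m * cutoff s ^ (m - 2) * 12"
        using m cutoff_bounds[of s] by (intro mult_right_mono mult_mono) auto
      finally show ?thesis .
    qed
    have "\<bar>cutoff_pow_d2 m s\<bar>
        \<le> real m * real m * cutoff s ^ (m - 2) * 36 + real m * real m * cutoff s ^ (m - 2) * 12"
      unfolding cutoff_pow_d2_def q1 q2 using t1 t2 by linarith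
    then show ?thesis by (simp add: power2_eq_square algebra_simps)
  next
    case False
    then have "pos_pow (m - 1) (1 - tail_cube s) = 0"
        "pos_pow (m - 2) (1 - tail_cube s) = 0" using m by (auto simp: pos_pow_def max_def)
    then show ?thesis using cutoff_bounds[of s] by (simp add: cutoff_pow_d2_def)
  qed
qed

lemma cutoff_pow_d1_nonpos:
  "m \<ge> 3 \<Longrightarrow> s \<ge> 0 \<Longrightarrow> cutoff_pow_d1 m s \<le> 0"
  by (auto simp: cutoff_pow_d1_def tail_cube_d1_def pos_pow_def max_def intro!: mult_nonneg_nonneg)

section \<open>Separable functions\<close>

lemma Basis_cart_eq_range: "(Basis :: (real^'n) set) = range (\<lambda>a. axis a 1)"
  by (auto simp: Basis_vec_def)

lemma sum_Basis_cart:
  "(\<Sum>b\<in>(Basis :: (real^'n) set). f b) = (\<Sum>a\<in>UNIV. f (axis a 1))"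
  unfolding Basis_cart_eq_range by (subst sum.reindex) (auto simp: inj_on_def axis_eq_axis)

lemma Basis_pt_cases:
  fixes v :: "('n::finite,'k::finite) pt"
  assumes "v \<in> Basis"
  obtains a where "v = (axis a 1, 0)" | b where "v = (0, axis b 1)"
  using assms by (auto simp: Basis_prod_def Basis_vec_def)

definition sep_fun ::
  "real \<Rightarrow> ('n::finite \<Rightarrow> real \<Rightarrow> real) \<Rightarrow>
      ('k::finite \<Rightarrow> real \<Rightarrow> real) \<Rightarrow> ('n,'k) pt \<Rightarrow> real"
  where "sep_fun c h k z = c * (\<Prod>i\<in>UNIV. h i (fst z $ i)) * (\<Prod>j\<in>UNIV. k j (snd z $ j))"

lemma sep_fun_scale: "sep_fun c h k z = c * sep_fun 1 h k z"
  by (simp add: sep_fun_def)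

lemma sep_fun_upd_x:
  "sep_fun c (h(a := f)) k z =
     (c * (\<Prod>i\<in>UNIV-{a}. h i (fst z $ i)) * (\<Prod>j\<in>UNIV. k j (snd z $ j))) * f (fst z $ a)"
proof -
  have "(\<Prod>i\<in>UNIV. (h(a := f)) i (fst z $ i))
      = f (fst z $ a) * (\<Prod>i\<in>UNIV-{a}. h i (fst z $ i))"
    by (subst prod.remove[of _ a]) (auto intro!: prod.cong)
  then show ?thesis by (simp add: sep_fun_def)
qed

lemma sep_fun_upd_y:
  "sep_fun c h (k(b := f)) z =
     (c * (\<Prod>i\<in>UNIV. h i (fst z $ i)) * (\<Prod>j\<in>UNIV-{b}. k j (snd z $ j))) * f (snd z $ b)"
proof -
  have "(\<Prod>j\<in>UNIV. (k(b := f)) j (snd z $ j))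
      = f (snd z $ b) * (\<Prod>j\<in>UNIV-{b}. k j (snd z $ j))"
    by (subst prod.remove[of _ b]) (auto intro!: prod.cong)
  then show ?thesis by (simp add: sep_fun_def)
qed

lemma sep_fun_line_x:
  "sep_fun c h k (z + s *\<^sub>R (axis a 1, 0)) =
     (c * (\<Prod>i\<in>UNIV-{a}. h i (fst z $ i)) * (\<Prod>j\<in>UNIV. k j (snd z $ j)))
       * h a (fst z $ a + s)"
proof -
  have "(\<Prod>i\<in>UNIV. h i (fst (z + s *\<^sub>R (axis a 1, 0)) $ i)) =
        h a (fst z $ a + s) * (\<Prod>i\<in>UNIV-{a}. h i (fst z $ i))"
    by (subst prod.remove[of _ a]) (auto intro!: prod.cong simp: axis_def)
  then show ?thesis by (simp add: sep_fun_def)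
qed

lemma sep_fun_line_y:
  "sep_fun c h k (z + s *\<^sub>R (0, axis b 1)) =
     (c * (\<Prod>i\<in>UNIV. h i (fst z $ i)) * (\<Prod>j\<in>UNIV-{b}. k j (snd z $ j)))
       * k b (snd z $ b + s)"
proof -
  have "(\<Prod>j\<in>UNIV. k j (snd (z + s *\<^sub>R (0, axis b 1)) $ j)) =
        k b (snd z $ b + s) * (\<Prod>j\<in>UNIV-{b}. k j (snd z $ j))"
    by (subst prod.remove[of _ b]) (auto intro!: prod.cong simp: axis_def)
  then show ?thesis by (simp add: sep_fun_def)
qed

lemma DERIV_cmult_shift:
  assumes "\<And>s. (f has_real_derivative f' s) (at s)"
  shows "((\<lambda>s. C * f (x0 + s)) has_real_derivative C * f' x0) (at 0)"
proof -
  have "((\<lambda>s. f (x0 + s)) has_real_derivative f' (x0 + 0) * (0 + 1)) (at 0)"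
    by (rule DERIV_chain2[OF assms]) (auto intro!: derivative_eq_intros)
  then show ?thesis by (auto intro!: derivative_eq_intros)
qed

lemma sep_fun_line_x_has_derivative:
  assumes "\<And>s. (h a has_real_derivative f s) (at s)"
  shows "((\<lambda>s. sep_fun c h k (z + s *\<^sub>R (axis a 1, 0))) has_real_derivative sep_fun c
    (h(a := f)) k z) (at 0)"
  unfolding sep_fun_line_x sep_fun_upd_x by (rule DERIV_cmult_shift[OF assms])

lemma sep_fun_line_y_has_derivative:
  assumes "\<And>s. (k b has_real_derivative f s) (at s)"
  shows "((\<lambda>s. sep_fun c h k (z + s *\<^sub>R (0, axis b 1))) has_real_derivative sep_fun c h
    (k(b := f)) z) (at 0)"
  unfolding sep_fun_line_y sep_fun_upd_y by (rule DERIV_cmult_shift[OF assms])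

lemma pd_sep_fun_x:
  assumes "\<And>s. (h a has_real_derivative f s) (at s)"
  shows "pd (sep_fun c h k) (axis a 1, 0) = sep_fun c (h(a := f)) k"
  unfolding pd_def using sep_fun_line_x_has_derivative[of h a f, OF assms] by (blast intro: DERIV_imp_deriv)

lemma pd_sep_fun_y:
  assumes "\<And>s. (k b has_real_derivative f s) (at s)"
  shows "pd (sep_fun c h k) (0, axis b 1) = sep_fun c h (k(b := f))"
  unfolding pd_def using sep_fun_line_y_has_derivative[of k b f, OF assms] by (blast intro: DERIV_imp_deriv)

lemma continuous_on_sep_fun [continuous_intros]:
  fixes U :: "real set" and h :: "'n::finite \<Rightarrow> real \<Rightarrow> real"
    and k :: "'k::finite \<Rightarrow> real \<Rightarrow> real"
  assumes "continuous_on U c" "\<And>i. continuous_on UNIV (h i)" "\<And>j. continuous_on UNIV (k j)"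
  shows "continuous_on (UNIV \<times> U) (\<lambda>(z, t). sep_fun (c t) h k z)"
proof -
  define S where "S = (UNIV \<times> U :: (('n,'k) pt \<times> real) set)"
  have h: "continuous_on S (\<lambda>w. h i (fst (fst w) $ i))" for i
    by (rule continuous_on_compose2[OF assms(2)[of i]]) (auto intro!: continuous_intros)
  have k: "continuous_on S (\<lambda>w. k j (snd (fst w) $ j))" for j
    by (rule continuous_on_compose2[OF assms(3)[of j]]) (auto intro!: continuous_intros)
  have "continuous_on S
      (\<lambda>w. c (snd w) * (\<Prod>i\<in>UNIV. h i (fst (fst w) $ i))
      * (\<Prod>j\<in>UNIV. k j (snd (fst w) $ j)))"
    by (intro continuous_intros h k continuous_on_compose2[OF assms(1)]) (auto simp: S_def)
  then show ?thesis by (simp add: sep_fun_def case_prod_unfold S_def)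
qed

lemma sep_fun_support_cbox:
  fixes h :: "'n::finite \<Rightarrow> real \<Rightarrow> real"
    and k :: "'k::finite \<Rightarrow> real \<Rightarrow> real"
  assumes h: "\<And>i s. r \<le> \<bar>s\<bar>
    \<Longrightarrow> h i s = 0" and k: "\<And>j s. r \<le> \<bar>s\<bar> \<Longrightarrow> k j s = 0"
    and nz: "sep_fun c h k z \<noteq> 0"
  shows "z \<in> cbox (- r *\<^sub>R One) (r *\<^sub>R One)"
proof -
  have x: "\<bar>fst z $ i\<bar> < r" for i
  proof (rule ccontr)
    assume "\<not> ?thesis"
    then have "h i (fst z $ i) = 0" using h by simp
    then have "(\<Prod>i\<in>UNIV. h i (fst z $ i)) = 0" by (intro prod_zero) auto
    then show False using nz by (simp add: sep_fun_def)
  qed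
  have y: "\<bar>snd z $ j\<bar> < r" for j
  proof (rule ccontr)
    assume "\<not> ?thesis"
    then have "k j (snd z $ j) = 0" using k by simp
    then have "(\<Prod>j\<in>UNIV. k j (snd z $ j)) = 0" by (intro prod_zero) auto
    then show False using nz by (simp add: sep_fun_def)
  qed
  show ?thesis unfolding mem_box
  proof
    fix v :: "('n,'k) pt" assume v: "v \<in> Basis"
    then have o: "(One :: ('n,'k) pt) \<bullet> v = 1" by simp
    from v show "(- r *\<^sub>R One) \<bullet> v \<le> z \<bullet> v \<and> z \<bullet> v
        \<le> (r *\<^sub>R One) \<bullet> v"
    proof (cases rule: Basis_pt_cases)
      case (1 a) then show ?thesis using x[of a] o by (auto simp: inner_Pair_0 inner_axis)
    next
      case (2 b) then show ?thesis using y[of b] o by (auto simp: inner_Pair_0 inner_axis)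
    qed
  qed
qed

definition fam_has_deriv :: "('i \<Rightarrow> real \<Rightarrow> real) \<Rightarrow>
    ('i \<Rightarrow> real \<Rightarrow> real) \<Rightarrow> bool" where
  "fam_has_deriv h h' \<longleftrightarrow> (\<forall>i s. (h i has_real_derivative h' i s) (at s))"

definition fam_continuous :: "('i \<Rightarrow> real \<Rightarrow> real) \<Rightarrow> bool" where
  "fam_continuous h \<longleftrightarrow> (\<forall>i. continuous_on UNIV (h i))"

definition fam_C1 :: "('i \<Rightarrow> real \<Rightarrow> real) \<Rightarrow> bool" where
  "fam_C1 h \<longleftrightarrow> fam_continuous h
      \<and> (\<exists>h'. fam_has_deriv h h' \<and> fam_continuous h')"

definition fam_C2 :: "('i \<Rightarrow> real \<Rightarrow> real) \<Rightarrow> bool" where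
  "fam_C2 h \<longleftrightarrow> fam_continuous h \<and> (\<exists>h'. fam_has_deriv h h' \<and> fam_C1 h')"

lemma fam_C2_imp_C1: "fam_C2 h \<Longrightarrow> fam_C1 h"
  by (auto simp: fam_C2_def fam_C1_def)

lemma fam_continuous_upd:
  "fam_continuous h \<Longrightarrow> continuous_on UNIV f \<Longrightarrow> fam_continuous (h(a := f))"
  by (auto simp: fam_continuous_def)

lemma sep_fun_line_differentiable:
  fixes h :: "'n::finite \<Rightarrow> real \<Rightarrow> real"
    and k :: "'k::finite \<Rightarrow> real \<Rightarrow> real"
  assumes "fam_C1 h" "fam_C1 k" "v \<in> Basis"
  shows "(\<lambda>s. sep_fun c h k (z + s *\<^sub>R v)) field_differentiable (at 0)"
proof -
  obtain h1 k1 where d: "fam_has_deriv h h1" "fam_has_deriv k k1"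
    using assms(1,2) by (auto simp: fam_C1_def)
  from assms(3) show ?thesis
  proof (cases rule: Basis_pt_cases)
    case (1 a)
    have "\<And>s. (h a has_real_derivative h1 a s) (at s)" using d(1) by (simp add: fam_has_deriv_def)
    from sep_fun_line_x_has_derivative[of h a "h1 a", OF this] show ?thesis
      unfolding 1 field_differentiable_def by blast
  next
    case (2 b)
    have "\<And>s. (k b has_real_derivative k1 b s) (at s)" using d(2) by (simp add: fam_has_deriv_def)
    from sep_fun_line_y_has_derivative[of k b "k1 b", OF this] show ?thesis
      unfolding 2 field_differentiable_def by blast
  qed
qed

lemma pd_sep_fun_C1:
  fixes h :: "'n::finite \<Rightarrow> real \<Rightarrow> real"
    and k :: "'k::finite \<Rightarrow> real \<Rightarrow> real"
  assumes "fam_C1 h" "fam_C1 k" "v \<in> Basis"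
  obtains h' k' where "\<And>c. pd (sep_fun c h k) v = sep_fun c h' k'"
    "fam_continuous h'" "fam_continuous k'"
proof -
  obtain h1 k1 where d: "fam_has_deriv h h1" "fam_has_deriv k k1"
    and c: "fam_continuous h" "fam_continuous k" "fam_continuous h1" "fam_continuous k1"
    using assms(1,2) by (auto simp: fam_C1_def)
  from assms(3) show ?thesis
  proof (cases rule: Basis_pt_cases)
    case (1 a)
    have "pd (sep_fun c h k) v = sep_fun c (h(a := h1 a)) k" for c
      unfolding 1 by (rule pd_sep_fun_x) (use d(1) in \<open>simp add: fam_has_deriv_def\<close>)
    moreover have "fam_continuous (h(a := h1 a))"
      using c by (simp add: fam_continuous_upd fam_continuous_def)
    ultimately show ?thesis using that c(2) by blast
  next
    case (2 b)
    have "pd (sep_fun c h k) v = sep_fun c h (k(b := k1 b))" for c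
      unfolding 2 by (rule pd_sep_fun_y) (use d(2) in \<open>simp add: fam_has_deriv_def\<close>)
    moreover have "fam_continuous (k(b := k1 b))"
      using c by (simp add: fam_continuous_upd fam_continuous_def)
    ultimately show ?thesis using that c(1) by blast
  qed
qed

lemma fam_C1_upd:
  assumes "fam_continuous h" "fam_C1 h1" "fam_has_deriv h h1"
  shows "fam_C1 (h(a := h1 a))"
proof -
  obtain h2 where "fam_has_deriv h1 h2" "fam_continuous h1" "fam_continuous h2"
    using assms(2) by (auto simp: fam_C1_def)
  then have "fam_has_deriv (h(a := h1 a)) (h1(a := h2 a))" "fam_continuous (h(a := h1 a))"
    "fam_continuous (h1(a := h2 a))"
    using assms(1,3) by (auto simp: fam_has_deriv_def fam_continuous_def)
  then show ?thesis unfolding fam_C1_def by blast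
qed

lemma pd_sep_fun_C2:
  fixes h :: "'n::finite \<Rightarrow> real \<Rightarrow> real"
    and k :: "'k::finite \<Rightarrow> real \<Rightarrow> real"
  assumes "fam_C2 h" "fam_C2 k" "v \<in> Basis"
  obtains h' k' where "\<And>c. pd (sep_fun c h k) v = sep_fun c h' k'" "fam_C1 h'" "fam_C1 k'"
proof -
  obtain h1 k1 where d: "fam_has_deriv h h1" "fam_has_deriv k k1"
    and c: "fam_continuous h" "fam_continuous k" "fam_C1 h1" "fam_C1 k1"
    using assms(1,2) by (auto simp: fam_C2_def)
  from assms(3) show ?thesis
  proof (cases rule: Basis_pt_cases)
    case (1 a)
    have "pd (sep_fun c h k) v = sep_fun c (h(a := h1 a)) k" for c
      unfolding 1 by (rule pd_sep_fun_x) (use d(1) in \<open>simp add: fam_has_deriv_def\<close>)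
    then show ?thesis
      using that fam_C1_upd[OF c(1,3) d(1)] fam_C2_imp_C1[OF assms(2)] by blast
  next
    case (2 b)
    have "pd (sep_fun c h k) v = sep_fun c h (k(b := k1 b))" for c
      unfolding 2 by (rule pd_sep_fun_y) (use d(2) in \<open>simp add: fam_has_deriv_def\<close>)
    then show ?thesis
      using that fam_C1_upd[OF c(2,4) d(2)] fam_C2_imp_C1[OF assms(1)] by blast
  qed
qed

lemma dtime_sep_fun:
  assumes "\<And>s. (c has_real_derivative c' s) (at s)" "T > 0" "t \<in> {0..T}"
  shows "dtime T (\<lambda>z t. sep_fun (c t) h k z) z t = c' t * sep_fun 1 h k z"
proof -
  have "((\<lambda>s. c s * sep_fun 1 h k z) has_real_derivative c' t * sep_fun 1 h k z) (at t)"
    using assms(1)[of t] by (auto intro!: derivative_eq_intros)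
  then have "((\<lambda>s. sep_fun (c s) h k z) has_vector_derivative c' t * sep_fun 1 h k z) (at t)"
    by (subst sep_fun_scale) (simp add: has_real_derivative_iff_has_vector_derivative)
  then show ?thesis unfolding dtime_def
    using assms(2,3) by (intro vector_derivative_at_within_ivl) auto
qed

lemma test_fun_sep_fun:
  fixes h :: "'n::finite \<Rightarrow> real \<Rightarrow> real"
    and k :: "'k::finite \<Rightarrow> real \<Rightarrow> real"
  assumes h: "fam_C2 h" "\<And>i s. r \<le> \<bar>s\<bar> \<Longrightarrow> h i s = 0"
    and k: "fam_C2 k" "\<And>j s. r \<le> \<bar>s\<bar> \<Longrightarrow> k j s = 0"
    and c: "\<And>s. (c has_real_derivative c' s) (at s)" "continuous_on UNIV c'"
    and T: "T > 0" "c T = 0"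
  shows "test_fun T (\<lambda>z t. sep_fun (c t) h k z)"
  unfolding test_fun_def
proof (intro conjI ballI allI)
  have cont_c: "continuous_on {0..T} c"
    using c(1) by (meson DERIV_continuous continuous_at_imp_continuous_on)
  have cont_c': "continuous_on {0..T} c'"
    using c(2) by (rule continuous_on_subset) simp
  have cont: "continuous_on (UNIV \<times> {0..T}) (\<lambda>(z, t). sep_fun (c t) h' k' z)"
    if "fam_continuous h'"
        "fam_continuous k'" for h' :: "'n \<Rightarrow> real \<Rightarrow> real"
        and k' :: "'k \<Rightarrow> real \<Rightarrow> real"
    using that by (intro continuous_on_sep_fun cont_c) (auto simp: fam_continuous_def)
  have hk: "fam_continuous h" "fam_continuous k" "fam_C1 h" "fam_C1 k"
    using h(1) k(1) fam_C2_imp_C1 by (auto simp: fam_C2_def)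
  show "\<exists>K. compact K
      \<and> (\<forall>z. \<forall>t\<in>{0..T}. sep_fun (c t) h k z \<noteq> 0 \<longrightarrow> z \<in> K)"
    using sep_fun_support_cbox[OF h(2) k(2)]
      by (intro exI[of _ "cbox (- r *\<^sub>R One) (r *\<^sub>R One)"]) auto
  show "(\<lambda>s. sep_fun (c t) h k (z + s *\<^sub>R i)) field_differentiable at 0" if "i \<in>
      Basis" for z t i
    by (rule sep_fun_line_differentiable[OF hk(3,4) that])
  show "(\<lambda>s. pd (\<lambda>w. sep_fun (c t) h k w) i (z + s *\<^sub>R j)) field_differentiable at 0"
    if "i \<in> Basis" "j \<in> Basis" for z t i j
    by (rule pd_sep_fun_C2[OF h(1) k(1) that(1)])
       (simp add: sep_fun_line_differentiable[OF _ _ that(2)])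
  show "((\<lambda>s. sep_fun (c s) h k z) has_real_derivative dtime T (\<lambda>z t. sep_fun (c t) h k z) z t)
          (at t within {0..T})" if "t \<in> {0..T}" for z t
  proof -
    have "((\<lambda>s. c s * sep_fun 1 h k z) has_real_derivative c' t * sep_fun 1 h k z) (at t)"
      using c(1)[of t] by (auto intro!: derivative_eq_intros)
    then show ?thesis using dtime_sep_fun[OF c(1) T(1) that, of h k z]
      by (subst (asm) sep_fun_scale[symmetric]) (auto intro: has_field_derivative_at_within)
  qed
  show "continuous_on (UNIV \<times> {0..T}) (\<lambda>(z, t). sep_fun (c t) h k z)"
    by (rule cont[OF hk(1,2)])
  show "continuous_on (UNIV \<times> {0..T})
      (\<lambda>(z, t). pd (\<lambda>w. sep_fun (c t) h k w) i z)" if "i \<in> Basis" for i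
    by (rule pd_sep_fun_C1[OF hk(3,4) that]) (simp add: cont)
  show "continuous_on (UNIV \<times> {0..T}) (\<lambda>(z, t). pd (pd (\<lambda>w. sep_fun (c t) h k w) i) j z)"
    if ij: "i \<in> Basis" "j \<in> Basis" for i j
  proof -
    obtain h1 k1 where 1: "\<And>c. pd (sep_fun c h k) i = sep_fun c h1 k1" "fam_C1 h1" "fam_C1 k1"
      using pd_sep_fun_C2[OF h(1) k(1) ij(1)] by blast
    obtain h2 k2 where "\<And>c. pd (sep_fun c h1 k1) j = sep_fun c h2 k2" "fam_continuous h2"
        "fam_continuous k2"
      using pd_sep_fun_C1[OF 1(2,3) ij(2)] by blast
    then show ?thesis using cont by (simp add: 1)
  qed
  show "continuous_on (UNIV \<times> {0..T}) (\<lambda>(z, t). dtime T (\<lambda>z t. sep_fun (c t) h k z) z t)"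
  proof -
    have "continuous_on (UNIV \<times> {0..T}) (\<lambda>(z, t). sep_fun (c' t) h k z)"
      using hk(1,2) by (intro continuous_on_sep_fun cont_c') (auto simp: fam_continuous_def)
    then show ?thesis
      by (rule continuous_on_eq) (auto simp: dtime_sep_fun[OF c(1) T(1)] sep_fun_scale[of "c' _"])
  qed
  show "sep_fun (c T) h k z = 0" for z
    using T by (simp add: sep_fun_def)
qed

lemma grushin_sep_fun:
  fixes h :: "'n::finite \<Rightarrow> real \<Rightarrow> real"
    and k :: "'k::finite \<Rightarrow> real \<Rightarrow> real"
  assumes h: "fam_has_deriv h h1" "fam_has_deriv h1 h2" and k: "fam_has_deriv k k1" "fam_has_deriv k1 k2"
  shows "grushin (sep_fun c h k) z = (\<Sum>a\<in>UNIV. sep_fun c (h(a := h2 a)) k z)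
           + (norm (fst z))\<^sup>2 * (\<Sum>b\<in>UNIV. sep_fun c h (k(b := k2 b)) z)"
proof -
  have "pd (pd (sep_fun c h k) (axis a 1, 0)) (axis a 1, 0) = sep_fun c (h(a := h2 a)) k" for a
  proof -
    have "pd (sep_fun c h k) (axis a 1, 0) = sep_fun c (h(a := h1 a)) k"
      using h(1) by (intro pd_sep_fun_x) (simp add: fam_has_deriv_def)
    moreover have "pd (sep_fun c (h(a := h1 a)) k) (axis a 1, 0) = sep_fun c (h(a := h2 a)) k"
      using h(2) pd_sep_fun_x[of "h(a := h1 a)" a "h2 a" c k] by (simp add: fam_has_deriv_def)
    ultimately show ?thesis by simp
  qed
  moreover have "pd (pd (sep_fun c h k) (0, axis b 1)) (0, axis b 1) = sep_fun c h (k(b := k2 b))" for b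
  proof -
    have "pd (sep_fun c h k) (0, axis b 1) = sep_fun c h (k(b := k1 b))"
      using k(1) by (intro pd_sep_fun_y) (simp add: fam_has_deriv_def)
    moreover have "pd (sep_fun c h (k(b := k1 b))) (0, axis b 1) = sep_fun c h (k(b := k2 b))"
      using k(2) pd_sep_fun_y[of "k(b := k1 b)" b "k2 b" c h] by (simp add: fam_has_deriv_def)
    ultimately show ?thesis by simp
  qed
  ultimately show ?thesis unfolding grushin_def sum_Basis_cart by simp
qed

section \<open>The spatial cutoff and its Grushin Laplacian\<close>

definition cutoff_scaled :: "nat \<Rightarrow> real \<Rightarrow> 'i \<Rightarrow> real
    \<Rightarrow> real" where
  "cutoff_scaled m \<rho> = (\<lambda>i s. cutoff_pow m (s / \<rho>))"

definition cutoff_scaled_d1 :: "nat \<Rightarrow> real \<Rightarrow> 'i \<Rightarrow> real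
    \<Rightarrow> real" where
  "cutoff_scaled_d1 m \<rho> = (\<lambda>i s. cutoff_pow_d1 m (s / \<rho>) / \<rho>)"

definition cutoff_scaled_d2 :: "nat \<Rightarrow> real \<Rightarrow> 'i \<Rightarrow> real
    \<Rightarrow> real" where
  "cutoff_scaled_d2 m \<rho> = (\<lambda>i s. cutoff_pow_d2 m (s / \<rho>) / \<rho>^2)"

lemma DERIV_compose_divide:
  assumes "\<rho> \<noteq> 0" "\<And>s. (f has_real_derivative f' s) (at s)"
  shows "((\<lambda>s. f (s / \<rho>)) has_real_derivative f' (s / \<rho>) / \<rho>) (at s)"
proof -
  have "((\<lambda>s. s / \<rho>) has_real_derivative 1 / \<rho>) (at s)"
    using assms(1) by (auto intro!: derivative_eq_intros)
  from DERIV_chain2[OF assms(2) this] show ?thesis by simp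
qed

lemma fam_has_deriv_cutoff_scaled:
  "m \<ge> 3 \<Longrightarrow> \<rho> > 0
      \<Longrightarrow> fam_has_deriv (cutoff_scaled m \<rho>) (cutoff_scaled_d1 m \<rho>)"
  unfolding fam_has_deriv_def cutoff_scaled_def cutoff_scaled_d1_def
  using DERIV_compose_divide[OF _ cutoff_pow_has_derivative] by force

lemma fam_has_deriv_cutoff_scaled_d1:
  assumes "m \<ge> 3" "\<rho> > 0"
  shows "fam_has_deriv (cutoff_scaled_d1 m \<rho>) (cutoff_scaled_d2 m \<rho>)"
  unfolding fam_has_deriv_def cutoff_scaled_d1_def cutoff_scaled_d2_def
proof (intro allI)
  fix s
  have "((\<lambda>s. (1 / \<rho>) * cutoff_pow_d1 m (s / \<rho>)) has_real_derivative (1 / \<rho>)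
      * (cutoff_pow_d2 m (s / \<rho>) / \<rho>)) (at s)"
    using assms by (intro DERIV_cmult DERIV_compose_divide cutoff_pow_d1_has_derivative) auto
  then show "((\<lambda>s. cutoff_pow_d1 m (s / \<rho>) / \<rho>) has_real_derivative cutoff_pow_d2 m
      (s / \<rho>) / \<rho>\<^sup>2) (at s)"
    by (simp add: power2_eq_square)
qed

lemma fam_C2_cutoff_scaled:
  assumes "m \<ge> 3" "\<rho> > 0"
  shows "fam_C2 (cutoff_scaled m \<rho>)"
proof -
  have "fam_continuous (cutoff_scaled m \<rho>)" "fam_continuous (cutoff_scaled_d1 m \<rho>)"
    "fam_continuous (cutoff_scaled_d2 m \<rho>)"
    using assms by (auto simp: fam_continuous_def cutoff_scaled_def cutoff_scaled_d1_def
        cutoff_scaled_d2_def intro!: continuous_intros)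
  then show ?thesis
    using fam_has_deriv_cutoff_scaled[OF assms] fam_has_deriv_cutoff_scaled_d1[OF assms]
    unfolding fam_C2_def fam_C1_def by blast
qed

lemma grushin_sep_cutoff:
  fixes z :: "('n::finite,'k::finite) pt"
  assumes "m \<ge> 3" "R > 0"
  shows "grushin (sep_fun c (cutoff_scaled m R) (cutoff_scaled m (R^2))) z =
     (\<Sum>a\<in>UNIV. sep_fun c ((cutoff_scaled m R)(a := cutoff_scaled_d2 m R a)) (cutoff_scaled m (R^2)) z)
     + (norm (fst z))\<^sup>2
       * (\<Sum>b\<in>UNIV. sep_fun c (cutoff_scaled m R)
           ((cutoff_scaled m (R^2))(b := cutoff_scaled_d2 m (R^2) b)) z)"
proof -
  have R2: "R^2 > 0" using assms(2) by simp
  show ?thesis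
    by (rule grushin_sep_fun[OF fam_has_deriv_cutoff_scaled[OF assms] fam_has_deriv_cutoff_scaled_d1[OF assms]
          fam_has_deriv_cutoff_scaled[OF assms(1) R2] fam_has_deriv_cutoff_scaled_d1[OF assms(1) R2]])
qed

lemma fam_continuous_cutoff_scaled:
  "\<rho> > 0 \<Longrightarrow> fam_continuous (cutoff_scaled m \<rho>)"
  "\<rho> > 0 \<Longrightarrow> fam_continuous (cutoff_scaled_d2 m \<rho>)"
  by (auto simp: fam_continuous_def cutoff_scaled_def cutoff_scaled_d2_def intro!: continuous_intros)

lemma cutoff_divide_eq_0:
  "\<rho> > 0 \<Longrightarrow> 2 * \<rho> \<le> \<bar>s\<bar> \<Longrightarrow> cutoff (s / \<rho>) = 0"
  by (rule cutoff_eq_0) (simp add: field_simps abs_divide)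

lemma cutoff_scaled_eq_0:
  "m \<ge> 3 \<Longrightarrow> \<rho> > 0 \<Longrightarrow> 2 * \<rho> \<le> \<bar>s\<bar>
      \<Longrightarrow> cutoff_scaled m \<rho> i s = 0"
  using cutoff_divide_eq_0[of \<rho> s] by (simp add: cutoff_scaled_def cutoff_pow_eq)

definition theta :: "real \<Rightarrow> ('n::finite,'k::finite) pt \<Rightarrow> real" where
  "theta R z = (\<Prod>i\<in>UNIV. cutoff (fst z $ i / R)) * (\<Prod>j\<in>UNIV. cutoff (snd z $ j / R^2))"

lemma theta_bounds: "0 \<le> theta R z" "theta R z \<le> 1"
  unfolding theta_def using cutoff_bounds
  by (auto intro!: prod_nonneg mult_le_one prod_le_1 mult_nonneg_nonneg)

lemma theta_power:
  "theta R z ^ n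
      = (\<Prod>i\<in>UNIV. cutoff (fst z $ i / R) ^ n) * (\<Prod>j\<in>UNIV. cutoff (snd z $ j / R^2) ^ n)"
  by (simp add: theta_def power_mult_distrib prod_power_distrib)

lemma sep_fun_cutoff_scaled:
  "sep_fun c (cutoff_scaled m R) (cutoff_scaled m (R^2)) z = c * theta R z ^ m"
  by (simp add: sep_fun_def cutoff_scaled_def theta_def cutoff_pow_eq power_mult_distrib prod_power_distrib)

lemma theta_eq_1:
  "R > 0 \<Longrightarrow> (\<forall>i. \<bar>fst z $ i\<bar> \<le> R)
      \<Longrightarrow> (\<forall>j. \<bar>snd z $ j\<bar> \<le> R^2) \<Longrightarrow> theta R z = 1"
  unfolding theta_def using tail_cube_eq_0
  by (auto simp: cutoff_def abs_divide divide_le_eq_1 intro!: prod.neutral)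

lemma continuous_on_theta: "R > 0 \<Longrightarrow> continuous_on UNIV (theta R)"
  unfolding theta_def[abs_def] cutoff_def tail_cube_def by (intro continuous_intros) auto

lemma abs_prod_remove_mult_le:
  fixes q :: "'i::finite \<Rightarrow> real"
  assumes q: "\<And>i. 0 \<le> q i"
    "\<And>i. q i \<le> 1" and f: "\<bar>f\<bar> \<le> C * q a ^ n" and nm: "n \<le> m"
  shows "\<bar>(\<Prod>i\<in>UNIV-{a}. q i ^ m) * f\<bar> \<le> C * (\<Prod>i\<in>UNIV. q i ^ n)"
proof -
  have "(\<Prod>i\<in>UNIV-{a}. q i ^ m) \<le> (\<Prod>i\<in>UNIV-{a}. q i ^ n)"
    using q nm by (intro prod_mono) (auto intro: power_decreasing)
  moreover have "0 \<le> (\<Prod>i\<in>UNIV-{a}. q i ^ m)" using q by (intro prod_nonneg) auto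
  ultimately have "\<bar>(\<Prod>i\<in>UNIV-{a}. q i ^ m) * f\<bar>
      \<le> (\<Prod>i\<in>UNIV-{a}. q i ^ n) * (C * q a ^ n)"
    using f by (simp add: abs_mult) (intro mult_mono, auto)
  also have "\<dots> = C * (\<Prod>i\<in>UNIV. q i ^ n)"
    by (subst prod.remove[of UNIV a]) auto
  finally show ?thesis .
qed

definition test_const :: "nat \<Rightarrow> nat \<Rightarrow> nat \<Rightarrow> real" where
  "test_const m N k = 48 * real m ^ 2 * (1 + real N + 4 * real N * real k)"

lemma test_const_nonneg: "test_const m N k \<ge> 0"
  by (simp add: test_const_def)

lemma test_const_ge: "48 * real m ^ 2 \<le> test_const m N k"
  unfolding test_const_def by (simp add: mult_le_cancel_left1)

lemma grushin_x_term_bound: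
  fixes z :: "('n::finite,'k::finite) pt"
  assumes m: "m \<ge> 3" and R: "R > 0"
  shows "\<bar>sep_fun c ((cutoff_scaled m R)(a := cutoff_scaled_d2 m R a))
    (cutoff_scaled m (R^2)) z\<bar> \<le> \<bar>c\<bar> * (48 * real m ^ 2 / R^2) * theta R z ^ (m - 2)"
proof -
  let ?q = "\<lambda>i. cutoff (fst z $ i / R)"
  let ?r = "\<lambda>j. cutoff (snd z $ j / R^2)"
  have f: "\<bar>cutoff_scaled_d2 m R a (fst z $ a)\<bar> \<le> (48 * real m ^ 2 / R^2) * ?q a ^ (m - 2)"
    using cutoff_pow_d2_bound[OF m, of "fst z $ a / R"] R
      by (simp add: cutoff_scaled_d2_def abs_divide field_simps)
  have A: "\<bar>(\<Prod>i\<in>UNIV-{a}. ?q i ^ m) * cutoff_scaled_d2 m R a (fst z $ a)\<bar>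
      \<le> (48 * real m ^ 2 / R^2) * (\<Prod>i\<in>UNIV. ?q i ^ (m - 2))"
    by (rule abs_prod_remove_mult_le[of ?q, OF cutoff_bounds(1) cutoff_bounds(2) f]) simp
  have B: "\<bar>\<Prod>j\<in>UNIV. ?r j ^ m\<bar> \<le> (\<Prod>j\<in>UNIV. ?r j ^ (m - 2))"
    using cutoff_bounds by (auto simp: abs_prod intro!: prod_mono power_decreasing)
  have "sep_fun c ((cutoff_scaled m R)(a := cutoff_scaled_d2 m R a)) (cutoff_scaled m (R^2)) z =
        c * ((\<Prod>i\<in>UNIV-{a}. ?q i ^ m) * cutoff_scaled_d2 m R a (fst z $ a))
            * (\<Prod>j\<in>UNIV. ?r j ^ m)"
    by (simp add: sep_fun_upd_x cutoff_scaled_def cutoff_pow_eq)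
  then have "\<bar>sep_fun c ((cutoff_scaled m R)(a := cutoff_scaled_d2 m R a))
      (cutoff_scaled m (R^2)) z\<bar> =
        \<bar>c\<bar> * \<bar>(\<Prod>i\<in>UNIV-{a}. ?q i ^ m)
            * cutoff_scaled_d2 m R a (fst z $ a)\<bar> * \<bar>\<Prod>j\<in>UNIV. ?r j ^ m\<bar>"
    by (simp add: abs_mult)
  also have "\<dots> \<le> \<bar>c\<bar>
      * ((48 * real m ^ 2 / R^2) * (\<Prod>i\<in>UNIV. ?q i ^ (m - 2))) * (\<Prod>j\<in>UNIV. ?r j ^ (m - 2))"
  proof -
    have P: "0 \<le> (\<Prod>i\<in>UNIV. ?q i ^ (m - 2))" using cutoff_bounds by (intro prod_nonneg) auto
    have "0 \<le> \<bar>c\<bar> * ((48 * real m ^ 2 / R^2) * (\<Prod>i\<in>UNIV. ?q i ^ (m - 2)))"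
      using P by simp
    then show ?thesis using A B by (intro mult_mono) auto
  qed
  also have "\<dots> = \<bar>c\<bar> * (48 * real m ^ 2 / R^2) * theta R z ^ (m - 2)"
    by (simp add: theta_power)
  finally show ?thesis .
qed

lemma norm_sq_cart: "(norm (x :: real^'n))\<^sup>2 = (\<Sum>i\<in>UNIV. (x $ i)\<^sup>2)"
  by (simp add: norm_vec_def L2_set_def sum_nonneg)

lemma norm_sq_prod_cutoff_le:
  fixes x :: "real^'n"
  assumes m: "m \<ge> 3" and R: "R > 0"
  shows "(norm x)\<^sup>2 * (\<Prod>i\<in>UNIV. cutoff (x $ i / R) ^ m)
    \<le> (4 * real CARD('n) * R^2) * (\<Prod>i\<in>UNIV. cutoff (x $ i / R) ^ (m - 2))"
proof (cases "\<exists>i. cutoff (x $ i / R) = 0")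
  case True
  then obtain i where "cutoff (x $ i / R) = 0" by blast
  then have z: "(\<Prod>i\<in>UNIV. cutoff (x $ i / R) ^ m) = 0"
      using m by (intro prod_zero) (auto intro!: exI[of _ i])
  have "0 \<le> (\<Prod>i\<in>UNIV. cutoff (x $ i / R) ^ (m - 2))"
      using cutoff_bounds by (intro prod_nonneg) auto
  then show ?thesis unfolding z by simp
next
  case False
  have xi: "(x $ i)\<^sup>2 \<le> 4 * R^2" for i
  proof -
    have "\<bar>x $ i\<bar> < 2 * R" using False cutoff_divide_eq_0[OF R, of "x $ i"] by force
    then have "\<bar>x $ i\<bar>\<^sup>2 \<le> (2 * R)\<^sup>2" by (intro power_mono) auto
    then show ?thesis by (simp add: power_mult_distrib)
  qed
  have "(norm x)\<^sup>2 \<le> (\<Sum>i\<in>(UNIV::'n set). 4 * R^2)" unfolding norm_sq_cart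
      by (rule sum_mono) (rule xi)
  then have n: "(norm x)\<^sup>2 \<le> 4 * real CARD('n) * R^2" by simp
  have p: "(\<Prod>i\<in>UNIV. cutoff (x $ i / R) ^ m) \<le> (\<Prod>i\<in>UNIV. cutoff (x $ i / R) ^ (m - 2))"
    using cutoff_bounds by (intro prod_mono) (auto intro: power_decreasing)
  show ?thesis using n p cutoff_bounds
    by (intro mult_mono) (auto intro!: prod_nonneg)
qed

lemma grushin_y_term_bound:
  fixes z :: "('n::finite,'k::finite) pt"
  assumes m: "m \<ge> 3" and R: "R > 0"
  shows "\<bar>(norm (fst z))\<^sup>2
    * sep_fun c (cutoff_scaled m R) ((cutoff_scaled m (R^2))(b := cutoff_scaled_d2 m (R^2) b)) z\<bar>
     \<le> \<bar>c\<bar> * (192 * real CARD('n) * real m ^ 2 / R^2) * theta R z ^ (m - 2)"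
proof -
  let ?q = "\<lambda>i. cutoff (fst z $ i / R)"
  let ?r = "\<lambda>j. cutoff (snd z $ j / R^2)"
  have R2: "R^2 > 0" using R by simp
  have f: "\<bar>cutoff_scaled_d2 m (R^2) b (snd z $ b)\<bar>
      \<le> (48 * real m ^ 2 / (R^2)^2) * ?r b ^ (m - 2)"
    using cutoff_pow_d2_bound[OF m, of "snd z $ b / R^2"] R2
      by (simp add: cutoff_scaled_d2_def abs_divide field_simps)
  have A: "\<bar>(\<Prod>j\<in>UNIV-{b}. ?r j ^ m) * cutoff_scaled_d2 m (R^2) b (snd z $ b)\<bar>
      \<le> (48 * real m ^ 2 / (R^2)^2) * (\<Prod>j\<in>UNIV. ?r j ^ (m - 2))"
    by (rule abs_prod_remove_mult_le[of ?r, OF cutoff_bounds(1) cutoff_bounds(2) f]) simp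
  have B: "(norm (fst z))\<^sup>2 * (\<Prod>i\<in>UNIV. ?q i ^ m)
      \<le> (4 * real CARD('n) * R^2) * (\<Prod>i\<in>UNIV. ?q i ^ (m - 2))"
    by (rule norm_sq_prod_cutoff_le[OF m R])
  have "(norm (fst z))\<^sup>2
      * sep_fun c (cutoff_scaled m R) ((cutoff_scaled m (R^2))(b := cutoff_scaled_d2 m (R^2) b)) z =
        c * ((norm (fst z))\<^sup>2 * (\<Prod>i\<in>UNIV. ?q i ^ m))
            * ((\<Prod>j\<in>UNIV-{b}. ?r j ^ m) * cutoff_scaled_d2 m (R^2) b (snd z $ b))"
    by (simp add: sep_fun_upd_y cutoff_scaled_def cutoff_pow_eq)
  moreover have "\<bar>(norm (fst z))\<^sup>2 * (\<Prod>i\<in>UNIV. ?q i ^ m)\<bar>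
      = (norm (fst z))\<^sup>2 * (\<Prod>i\<in>UNIV. ?q i ^ m)"
    using cutoff_bounds by (intro abs_of_nonneg mult_nonneg_nonneg prod_nonneg) auto
  ultimately have "\<bar>(norm (fst z))\<^sup>2
      * sep_fun c (cutoff_scaled m R) ((cutoff_scaled m (R^2))(b := cutoff_scaled_d2 m (R^2) b)) z\<bar> =
        \<bar>c\<bar> * ((norm (fst z))\<^sup>2 * (\<Prod>i\<in>UNIV. ?q i ^ m))
            * \<bar>(\<Prod>j\<in>UNIV-{b}. ?r j ^ m) * cutoff_scaled_d2 m (R^2) b (snd z $ b)\<bar>"
    by (simp only: abs_mult)
  also have "\<dots> \<le> \<bar>c\<bar>
      * ((4 * real CARD('n) * R^2) * (\<Prod>i\<in>UNIV. ?q i ^ (m - 2)))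
      * ((48 * real m ^ 2 / (R^2)^2) * (\<Prod>j\<in>UNIV. ?r j ^ (m - 2)))"
  proof -
    have P: "0 \<le> (\<Prod>i\<in>UNIV. ?q i ^ (m - 2))" using cutoff_bounds by (intro prod_nonneg) auto
    have P2: "0 \<le> (\<Prod>i\<in>UNIV. ?q i ^ m)" using cutoff_bounds by (intro prod_nonneg) auto
    have "0 \<le> \<bar>c\<bar> * ((4 * real CARD('n) * R^2) * (\<Prod>i\<in>UNIV. ?q i ^ (m - 2)))"
      using P by simp
    moreover have "0 \<le> \<bar>c\<bar> * ((norm (fst z))\<^sup>2 * (\<Prod>i\<in>UNIV. ?q i ^ m))"
        using P2 by simp
    moreover have "\<bar>c\<bar> * ((norm (fst z))\<^sup>2 * (\<Prod>i\<in>UNIV. ?q i ^ m))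
        \<le> \<bar>c\<bar> * ((4 * real CARD('n) * R^2) * (\<Prod>i\<in>UNIV. ?q i ^ (m - 2)))"
      by (rule mult_left_mono[OF B]) simp
    ultimately show ?thesis by (intro mult_mono[OF _ A]) auto
  qed
  also have "\<dots> = \<bar>c\<bar> * (192 * real CARD('n) * real m ^ 2 / R^2) * theta R z ^ (m - 2)"
    using R by (simp add: theta_power field_simps power2_eq_square)
  finally show ?thesis .
qed

lemma abs_grushin_sep_cutoff_le:
  fixes z :: "('n::finite,'k::finite) pt"
  assumes m: "m \<ge> 3" and R: "R > 0"
  shows "\<bar>grushin (sep_fun c (cutoff_scaled m R) (cutoff_scaled m (R^2))) z\<bar> \<le>
     \<bar>c\<bar> * (test_const m CARD('n) CARD('k) / R^2) * theta R z ^ (m - 2)"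
proof -
  let ?B = "\<bar>c\<bar> * (48 * real m ^ 2 / R^2) * theta R z ^ (m - 2)"
  have g: "grushin (sep_fun c (cutoff_scaled m R) (cutoff_scaled m (R^2))) z =
     (\<Sum>a\<in>UNIV. sep_fun c ((cutoff_scaled m R)(a := cutoff_scaled_d2 m R a)) (cutoff_scaled m (R^2)) z)
     + (\<Sum>b\<in>UNIV. (norm (fst z))\<^sup>2
         * sep_fun c (cutoff_scaled m R) ((cutoff_scaled m (R^2))(b := cutoff_scaled_d2 m (R^2) b)) z)"
    by (subst grushin_sep_cutoff[OF m R]) (simp add: sum_distrib_left)
  have s1: "\<bar>\<Sum>a\<in>UNIV. sep_fun c ((cutoff_scaled m R)(a := cutoff_scaled_d2 m R a))
      (cutoff_scaled m (R^2)) z\<bar> \<le> (\<Sum>a\<in>(UNIV::'n set). ?B)"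
    by (rule order_trans[OF sum_abs sum_mono]) (rule grushin_x_term_bound[OF m R])
  have s2: "\<bar>\<Sum>b\<in>UNIV. (norm (fst z))\<^sup>2
      * sep_fun c (cutoff_scaled m R) ((cutoff_scaled m (R^2))(b := cutoff_scaled_d2 m (R^2) b)) z\<bar>
      \<le> (\<Sum>b\<in>(UNIV::'k set). \<bar>c\<bar> * (192 * real CARD('n) * real m ^ 2 / R^2)
          * theta R z ^ (m - 2))"
    by (rule order_trans[OF sum_abs sum_mono]) (rule grushin_y_term_bound[OF m R])
  have "\<bar>grushin (sep_fun c (cutoff_scaled m R) (cutoff_scaled m (R^2))) z\<bar>
      \<le> (\<Sum>a\<in>(UNIV::'n set). ?B) +
      (\<Sum>b\<in>(UNIV::'k set). \<bar>c\<bar> * (192 * real CARD('n) * real m ^ 2 / R^2)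
        * theta R z ^ (m - 2))"
    unfolding g using s1 s2 abs_triangle_ineq by (smt (verit))
  also have "\<dots> = \<bar>c\<bar>
      * (48 * real m ^ 2 * (real CARD('n) + 4 * real CARD('n) * real CARD('k)) / R^2) * theta R z ^ (m - 2)"
    using R by (simp add: field_simps)
  also have "\<dots> \<le> \<bar>c\<bar> * (test_const m CARD('n) CARD('k) / R^2) * theta R z ^ (m - 2)"
    using theta_bounds[of R z]
    by (intro mult_right_mono mult_left_mono divide_right_mono)
      (auto simp: test_const_def intro!: mult_left_mono)
  finally show ?thesis .
qed

lemma grushin_sep_cutoff_eq_0:
  fixes z :: "('n::finite,'k::finite) pt"
  assumes m: "m \<ge> 3" and R: "R > 0" and x: "\<And>i. \<bar>fst z $ i\<bar>
    \<le> R" and y: "\<And>j. \<bar>snd z $ j\<bar> \<le> R^2"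
  shows "grushin (sep_fun c (cutoff_scaled m R) (cutoff_scaled m (R^2))) z = 0"
proof -
  have R2: "R^2 > 0" using R by simp
  have "cutoff_scaled_d2 m R a (fst z $ a) = 0" for a
    using cutoff_pow_plateau[OF m, of "fst z $ a / R"] x[of a] R by (simp add: cutoff_scaled_d2_def abs_divide)
  moreover have "cutoff_scaled_d2 m (R^2) b (snd z $ b) = 0" for b
    using cutoff_pow_plateau[OF m, of "snd z $ b / R^2"] y[of b] R2
      by (simp add: cutoff_scaled_d2_def abs_divide)
  ultimately show ?thesis
    by (subst grushin_sep_cutoff[OF m R]) (simp add: sep_fun_upd_x sep_fun_upd_y)
qed

text \<open>No integrability of \<open>f\<close> is assumed: otherwise its integral is the junk
  value \<open>0\<close>.\<close>

lemma neg_integral_le_of_abs_le: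
  fixes f B :: "'a \<Rightarrow> real"
  assumes B: "integrable M B" and fB: "AE x in M. \<bar>f x\<bar> \<le> B x"
  shows "- integral\<^sup>L M f \<le> integral\<^sup>L M B"
proof (cases "integrable M f")
  case True
  have "- integral\<^sup>L M f = integral\<^sup>L M (\<lambda>x. - f x)" by simp
  also have "\<dots> \<le> integral\<^sup>L M B"
    using True B fB by (intro integral_mono_AE) (auto elim!: eventually_mono)
  finally show ?thesis .
next
  case False
  then have "integral\<^sup>L M f = 0" by (simp add: not_integrable_integral_eq)
  moreover have "0 \<le> integral\<^sup>L M B"
    using fB by (intro integral_nonneg_AE) (auto elim!: eventually_mono)
  ultimately show ?thesis by simp
qed

lemma L1_loc_integrable_mult:
  fixes f :: "'a::euclidean_space \<Rightarrow> real"
  assumes L: "L1_loc S f" and K: "compact K" "K \<subseteq> S" and g: "g \<in> borel_measurable lborel"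
    and gC: "\<And>w. \<bar>g w\<bar> \<le> C" and g0: "\<And>w. w \<notin> K \<Longrightarrow> g w = 0"
  shows "integrable lborel (\<lambda>w. f w * g w)"
proof -
  have si: "integrable lborel (\<lambda>x. indicator K x *\<^sub>R f x)"
    using L K unfolding L1_loc_def set_integrable_def by blast
  have eq: "f w * g w = (indicator K w *\<^sub>R f w) * g w" for w
    using g0[of w] by (cases "w \<in> K") auto
  have C0: "0 \<le> C" using gC[of undefined] by linarith
  have i1: "integrable lborel (\<lambda>x. C * (indicator K x *\<^sub>R f x))" using si by simp
  have m1: "(\<lambda>x. indicator K x *\<^sub>R f x * g x) \<in> borel_measurable lborel"
    using borel_measurable_integrable[OF si] g by measurable
  have a1: "AE x in lborel. norm (indicator K x *\<^sub>R f x * g x)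
      \<le> norm (C * (indicator K x *\<^sub>R f x))"
  proof (intro AE_I2)
    fix x
    have "indicator K x * \<bar>f x\<bar> * \<bar>g x\<bar> \<le> indicator K x * \<bar>f x\<bar> * C"
      by (rule mult_left_mono[OF gC]) simp
    then show "norm (indicator K x *\<^sub>R f x * g x) \<le> norm (C * (indicator K x *\<^sub>R f x))"
      using C0 by (simp add: abs_mult mult_ac)
  qed
  show ?thesis unfolding eq by (rule Bochner_Integration.integrable_bound[OF i1 m1 a1])
qed

lemma integrable_limit_bounded_integrals:
  fixes f :: "nat \<Rightarrow> 'a \<Rightarrow> real"
  assumes fi: "\<And>n. integrable M (f n)" and f0: "\<And>n. AE x in M. 0 \<le> f n x"
    and fB: "\<And>n. integral\<^sup>L M (f n) \<le> B"
    and lim: "\<And>x. x \<in> space M \<Longrightarrow> (\<lambda>n. f n x) \<longlonglongrightarrow> g x"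
  shows "integrable M g"
proof -
  have gm: "g \<in> borel_measurable M"
    by (rule borel_measurable_LIMSEQ_real[OF lim]) (use fi in auto)
  have g0: "AE x in M. 0 \<le> g x"
  proof -
    have "AE x in M. \<forall>n. 0 \<le> f n x" using f0 by (simp add: AE_all_countable)
    then show ?thesis
    proof (rule AE_mp[OF _ AE_I2], intro impI)
      fix x assume x: "x \<in> space M" "\<forall>n. 0 \<le> f n x"
      show "0 \<le> g x" by (rule LIMSEQ_le_const[OF lim[OF x(1)]]) (use x(2) in auto)
    qed
  qed
  have "(\<integral>\<^sup>+ x. ennreal (g x) \<partial>M)
      = (\<integral>\<^sup>+ x. liminf (\<lambda>n. ennreal (f n x)) \<partial>M)"
  proof (rule nn_integral_cong)
    fix x assume "x \<in> space M"
    then have "(\<lambda>n. ennreal (f n x)) \<longlonglongrightarrow> ennreal (g x)"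
      by (intro tendsto_ennrealI lim)
    then show "ennreal (g x) = liminf (\<lambda>n. ennreal (f n x))"
      by (simp add: lim_imp_Liminf)
  qed
  also have "\<dots> \<le> liminf (\<lambda>n. \<integral>\<^sup>+ x. ennreal (f n x) \<partial>M)"
    by (rule nn_integral_liminf) (use fi in auto)
  also have "\<dots> \<le> limsup (\<lambda>n. \<integral>\<^sup>+ x. ennreal (f n x) \<partial>M)"
    by (rule Liminf_le_Limsup) simp
  also have "\<dots> \<le> ennreal B"
  proof (rule Limsup_bounded, rule always_eventually, intro allI)
    fix n
    have "(\<integral>\<^sup>+ x. ennreal (f n x) \<partial>M) = ennreal (integral\<^sup>L M (f n))"
      by (rule nn_integral_eq_integral[OF fi f0])
    also have "\<dots> \<le> ennreal B" using fB[of n] by (rule ennreal_leI)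
    finally show "(\<integral>\<^sup>+ x. ennreal (f n x) \<partial>M) \<le> ennreal B" .
  qed
  finally have fin: "(\<integral>\<^sup>+ x. ennreal (g x) \<partial>M) < \<infinity>"
      by (metis ennreal_less_top infinity_ennreal_def le_less_trans)
  show ?thesis
  proof (rule integrableI_bounded[OF gm])
    have "(\<integral>\<^sup>+ x. ennreal (norm (g x)) \<partial>M)
        = (\<integral>\<^sup>+ x. ennreal (g x) \<partial>M)"
      using g0 by (intro nn_integral_cong_AE) (auto elim!: eventually_mono)
    then show "(\<integral>\<^sup>+ x. ennreal (norm (g x)) \<partial>M) < \<infinity>" using fin by simp
  qed
qed

definition st_box :: "real \<Rightarrow> real \<Rightarrow>
    (('n::finite,'k::finite) pt \<times> real) set" where
  "st_box a b = cbox (- ((a *\<^sub>R One, b *\<^sub>R One), b)) ((a *\<^sub>R One, b *\<^sub>R One), b)"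

lemma ball_Basis_prod:
  "(\<forall>v\<in>(Basis :: ('a::euclidean_space \<times> 'b::euclidean_space) set). P v) \<longleftrightarrow>
     (\<forall>u\<in>Basis. P (u, 0)) \<and> (\<forall>v\<in>Basis. P (0, v))"
  by (auto simp: Basis_prod_def)

lemma ball_Basis_cart:
  "(\<forall>v\<in>(Basis :: (real^'n) set). P v) \<longleftrightarrow> (\<forall>i. P (axis i 1))"
  by (auto simp: Basis_cart_eq_range)

lemma sum_Basis_vec_nth: "(\<Sum>x\<in>(Basis :: (real^'n) set). x $ i) = 1"
  by (simp add: sum_Basis_cart axis_def)

lemma mem_st_box:
  "w \<in> st_box a b \<longleftrightarrow>
     (\<forall>i. \<bar>fst (fst w) $ i\<bar> \<le> a)
       \<and> (\<forall>j. \<bar>snd (fst w) $ j\<bar> \<le> b) \<and> \<bar>snd w\<bar> \<le> b"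
proof -
  obtain x y t where w: "w = ((x, y), t)" by (metis prod.collapse)
  show ?thesis
    unfolding w st_box_def mem_box ball_Basis_prod ball_Basis_cart
    by (simp add: inner_Pair inner_axis abs_le_iff inner_minus_left sum_Basis_vec_nth)
       (auto simp: minus_le_iff)
qed

lemma compact_st_box: "compact (st_box a b)"
  by (simp add: st_box_def)

lemma st_box_sets [measurable]: "st_box a b \<in> sets lborel"
  by (simp add: st_box_def)

lemma st_box_compl_sets: "- st_box a b \<in> sets lborel"
proof -
  have "open (- st_box a b)" unfolding st_box_def by (intro open_Compl closed_cbox)
  from borel_open[OF this] show ?thesis by simp
qed

lemma prod_Basis_prod_eq:
  fixes f :: "('a::euclidean_space \<times> 'b::euclidean_space) \<Rightarrow> real"
  shows "prod f Basis = prod (\<lambda>i. f (i, 0)) Basis * prod (\<lambda>i. f (0, i)) Basis"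
proof -
  have "inj_on (\<lambda>u. (u::'a, 0::'b)) Basis" "inj_on (\<lambda>u. (0::'a, u::'b)) Basis"
    by (auto intro!: inj_onI Pair_inject)
  then show ?thesis
    unfolding Basis_prod_def by (subst prod.union_disjoint) (auto simp: prod.reindex)
qed

lemma measure_st_box:
  assumes "0 \<le> a" "0 \<le> b"
  shows "measure lborel (st_box a b :: (('n::finite,'k::finite) pt \<times> real) set) =
    (2 * a) ^ CARD('n) * (2 * b) ^ CARD('k) * (2 * b)"
proof -
  define c :: "('n,'k) pt \<times> real" where "c = ((a *\<^sub>R One, b *\<^sub>R One), b)"
  have c_inner: "\<And>u. u \<in> Basis
      \<Longrightarrow> c \<bullet> ((u, 0), 0) = a" "\<And>v. v \<in> Basis
      \<Longrightarrow> c \<bullet> ((0, v), 0) = b"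
    "c \<bullet> (0, 1) = b"
    unfolding c_def inner_Pair by (simp_all only: inner_scaleR_left inner_sum_Basis) simp_all
  have "measure lborel (st_box a b :: (('n,'k) pt \<times> real) set)
      = (\<Prod>v\<in>Basis. c \<bullet> v - (- c) \<bullet> v)"
    unfolding st_box_def c_def[symmetric] using assms
    by (subst content_cbox) (auto simp: Basis_prod_def c_inner inner_minus_left)
  also have "\<dots> = (\<Prod>v\<in>Basis. 2 * (c \<bullet> v))"
    by (intro prod.cong refl) (simp add: inner_minus_left)
  also have "\<dots> = (2 * a) ^ CARD('n) * (2 * b) ^ CARD('k) * (2 * b)"
    unfolding prod_Basis_prod_eq by (simp add: c_inner)
  finally show ?thesis .
qed

text \<open>The remainder left by Young's inequality at scale \<open>R\<close> is \<open>(X/R^2)^(p/(p-1))\<close> times the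
  measure of the support of the test function, which is of order \<open>R^(N+2k+2)\<close>; it stays bounded
  as \<open>R \<rightarrow> \<infinity>\<close> exactly when \<open>p \<le> 1 + 2/(N+2k)\<close>.\<close>

lemma scaled_measure_st_box_le:
  fixes X p R :: real
  assumes R: "R \<ge> 1" and X: "X \<ge> 0"
    and Q: "real CARD('n) + 2 * real CARD('k) + 2 \<le> 2 * (p / (p - 1))"
  shows "(X / R^2) powr (p / (p - 1))
    * measure lborel (st_box (2 * R) (2 * R^2) :: (('n::finite,'k::finite) pt \<times> real) set)
         \<le> X powr (p / (p - 1)) * 4 ^ (CARD('n) + CARD('k) + 1)"
proof -
  define q where "q = p / (p - 1)"
  define N where "N = CARD('n)"
  define k where "k = CARD('k)"
  have R0: "R > 0" using R by simp
  have meas: "measure lborel (st_box (2 * R) (2 * R^2) :: (('n,'k) pt \<times> real) set) =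
      4 ^ (N + k + 1) * R powr (real (N + 2 * k + 2))"
  proof -
    have "measure lborel (st_box (2 * R) (2 * R^2) :: (('n,'k) pt \<times> real) set) =
        (4 * R) ^ N * (4 * R^2) ^ k * (4 * R^2)"
      using measure_st_box[of "2 * R" "2 * R^2", where 'n='n and 'k='k] R0 unfolding N_def k_def by simp
    also have "\<dots> = (4 ^ N * 4 ^ k * 4) * (R ^ N * (R^2) ^ k * R^2)"
      by (simp only: power_mult_distrib) (simp add: ac_simps power2_eq_square)
    also have "\<dots> = 4 ^ (N + k + 1) * R ^ (N + 2 * k + 2)"
      by (simp only: power_add power_mult) simp
    finally show ?thesis by (simp only: powr_realpow[OF R0])
  qed
  have R2q: "(R^2) powr q = R powr (2 * q)"
  proof -
    have "R powr (real 2) = R^2" by (rule powr_realpow[OF R0])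
    then have "(R^2) powr q = (R powr 2) powr q" by simp
    also have "\<dots> = R powr (2 * q)" by (rule powr_powr)
    finally show ?thesis .
  qed
  have le: "R powr (real (N + 2 * k + 2)) \<le> R powr (2 * q)"
    using Q R unfolding q_def N_def k_def by (intro powr_mono) auto
  have "(X / R^2) powr q = X powr q / R powr (2 * q)"
    using X R0 by (simp add: powr_divide R2q)
  then have "(X / R^2) powr q * measure lborel (st_box (2 * R) (2 * R^2) :: (('n,'k) pt \<times> real) set)
      = X powr q * 4 ^ (N + k + 1) * (R powr (real (N + 2 * k + 2)) / R powr (2 * q))"
    unfolding meas by (simp add: field_simps)
  also have "\<dots> \<le> X powr q * 4 ^ (N + k + 1) * 1"
    using le R0 by (intro mult_left_mono) (auto simp: divide_le_eq_1)
  finally show ?thesis unfolding q_def N_def k_def by simp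
qed

lemma eventually_mem_st_box:
  fixes w :: "('n::finite,'k::finite) pt \<times> real"
  assumes t: "snd w > 0"
  shows "\<forall>\<^sub>F n in sequentially. w \<in> st_box (real n + 1) ((real n + 1)^2)
    \<and> 2 * (1 / (real n + 1)) \<le> snd w"
proof -
  define M where "M
      = (\<Sum>i\<in>UNIV. \<bar>fst (fst w) $ i\<bar>)
      + (\<Sum>j\<in>UNIV. \<bar>snd (fst w) $ j\<bar>) + snd w + 2 / snd w"
  obtain N :: nat where N: "M \<le> real N" using real_arch_simple by blast
  show ?thesis unfolding eventually_sequentially
  proof (intro exI[of _ N] allI impI)
    fix n assume n: "N \<le> n"
    define R where "R = real n + 1"
    have R1: "R \<ge> 1" by (simp add: R_def)
    have RR: "R \<le> R^2" using R1 by (simp add: power2_eq_square)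
    have RM: "M \<le> R" using N n by (simp add: R_def)
    have s: "(\<Sum>i\<in>UNIV. \<bar>fst (fst w) $ i\<bar>) \<ge> 0"
        "(\<Sum>j\<in>UNIV. \<bar>snd (fst w) $ j\<bar>) \<ge> 0"
      "2 / snd w > 0"
      using t by (auto intro: sum_nonneg)
    have sx: "\<bar>fst (fst w) $ i\<bar> \<le> (\<Sum>i\<in>UNIV. \<bar>fst (fst w) $ i\<bar>)" for i
      by (rule member_le_sum) auto
    have sy: "\<bar>snd (fst w) $ j\<bar> \<le> (\<Sum>j\<in>UNIV. \<bar>snd (fst w) $ j\<bar>)" for j
      by (rule member_le_sum) auto
    have "\<bar>fst (fst w) $ i\<bar> \<le> R" for i
      using sx[of i] RM s t unfolding M_def by linarith
    moreover have "\<bar>snd (fst w) $ j\<bar> \<le> R^2" for j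
      using sy[of j] RM RR s t unfolding M_def by linarith
    moreover have "\<bar>snd w\<bar> \<le> R^2" using RM RR s t unfolding M_def by linarith
    moreover have "2 * (1 / R) \<le> snd w"
    proof -
      have "2 / snd w \<le> R" using RM s t unfolding M_def by linarith
      then show ?thesis using t R1 by (simp add: field_simps)
    qed
    ultimately show "w \<in> st_box (real n + 1) ((real n + 1)^2) \<and> 2 * (1 / (real n + 1)) \<le> snd w"
      by (simp add: mem_st_box R_def)
  qed
qed

lemma integral_theta_power_tendsto:
  fixes u0 :: "('n::finite,'k::finite) pt \<Rightarrow> real"
  assumes u0: "integrable lborel u0"
  shows "(\<lambda>n. \<integral>z. u0 z * theta (real n + 1) z ^ m \<partial>lborel)
    \<longlonglongrightarrow> (\<integral>z. u0 z \<partial>lborel)"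
proof (rule integral_dominated_convergence[where w = "\<lambda>z. \<bar>u0 z\<bar>"])
  show "u0 \<in> borel_measurable lborel" using u0 by (rule borel_measurable_integrable)
  show "(\<lambda>z. u0 z * theta (real n + 1) z ^ m) \<in> borel_measurable lborel" for n
  proof -
    have "theta (real n + 1) \<in> borel_measurable (lborel :: ('n,'k) pt measure)"
      by (simp add: borel_measurable_continuous_onI continuous_on_theta)
    then show ?thesis using borel_measurable_integrable[OF u0] by measurable
  qed
  show "integrable lborel (\<lambda>z. \<bar>u0 z\<bar>)" using u0 by simp
  show "AE z in lborel. norm (u0 z * theta (real n + 1) z ^ m) \<le> \<bar>u0 z\<bar>" for n
  proof (intro AE_I2)
    fix z :: "('n,'k) pt"
    have "\<bar>theta (real n + 1) z ^ m\<bar> \<le> 1"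
      using theta_bounds[of "real n + 1" z] by (simp add: power_le_one)
    then show "norm (u0 z * theta (real n + 1) z ^ m) \<le> \<bar>u0 z\<bar>"
      by (simp add: abs_mult mult_left_le)
  qed
  show "AE z in lborel. (\<lambda>n. u0 z * theta (real n + 1) z ^ m) \<longlonglongrightarrow> u0 z"
  proof (rule AE_I2)
    fix z :: "('n,'k) pt"
    have "\<forall>\<^sub>F n in sequentially. u0 z * theta (real n + 1) z ^ m = u0 z"
    proof (rule eventually_mono[OF eventually_mem_st_box[of "(z, 1)"]])
      fix n assume
          "(z, 1) \<in> st_box (real n + 1) ((real n + 1)^2) \<and> 2 * (1 / (real n + 1))
          \<le> snd (z, 1::real)"
      then have "theta (real n + 1) z = 1" by (intro theta_eq_1) (auto simp: mem_st_box)
      then show "u0 z * theta (real n + 1) z ^ m = u0 z" by simp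
    qed simp
    then show "(\<lambda>n. u0 z * theta (real n + 1) z ^ m) \<longlonglongrightarrow> u0 z"
        by (rule tendsto_eventually)
  qed
qed

lemma integral_outside_st_box_tendsto_0:
  fixes f :: "('n::finite,'k::finite) pt \<times> real \<Rightarrow> real"
  assumes f: "integrable lborel f" and f0: "\<And>w. snd w \<le> 0 \<Longrightarrow> f w = 0"
  shows "(\<lambda>n. \<integral>w. f w
    * indicator (- st_box (real n + 1) ((real n + 1)^2)) w \<partial>lborel) \<longlonglongrightarrow> 0"
proof -
  have "(\<lambda>n. \<integral>w. f w * indicator (- st_box (real n + 1) ((real n + 1)^2)) w \<partial>lborel)
      \<longlonglongrightarrow> integral\<^sup>L lborel (\<lambda>w::('n,'k) pt \<times> real. 0::real)"
  proof (rule integral_dominated_convergence[where w = "\<lambda>w. \<bar>f w\<bar>"])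
    show "(\<lambda>w. f w * indicator (- st_box (real n + 1) ((real n + 1)^2)) w) \<in>
        borel_measurable lborel" for n
      using borel_measurable_integrable[OF f] by measurable
    show "AE w in lborel. norm (f w * indicator (- st_box (real n + 1) ((real n + 1)^2)) w)
        \<le> \<bar>f w\<bar>" for n
      by (intro AE_I2) (simp add: indicator_def)
    show "AE w in lborel.
        (\<lambda>n. f w * indicator (- st_box (real n + 1) ((real n + 1)^2)) w) \<longlonglongrightarrow> 0"
    proof (rule AE_I2)
      fix w :: "('n,'k) pt \<times> real"
      have "\<forall>\<^sub>F n in sequentially. f w * indicator (- st_box (real n + 1) ((real n + 1)^2)) w = 0"
      proof (cases "snd w > 0")
        case True
        show ?thesis by (rule eventually_mono[OF eventually_mem_st_box[OF True]]) simp
      qed (simp add: f0)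
      then show "(\<lambda>n. f w * indicator (- st_box (real n + 1) ((real n + 1)^2)) w)
          \<longlonglongrightarrow> 0"
        by (rule tendsto_eventually)
    qed
  qed (use f in auto)
  then show ?thesis by simp
qed

section \<open>Test functions\<close>

definition time_cutoff :: "nat \<Rightarrow> real \<Rightarrow> real \<Rightarrow> real" where
  "time_cutoff m R t = cutoff_pow m (t / R^2)"

definition time_cutoff_d1 :: "nat \<Rightarrow> real \<Rightarrow> real \<Rightarrow> real" where
  "time_cutoff_d1 m R t = cutoff_pow_d1 m (t / R^2) / R^2"

definition initial_cutoff :: "nat \<Rightarrow> real \<Rightarrow> real \<Rightarrow> real" where
  "initial_cutoff m e t = 1 - cutoff_pow m (t / e)"

definition initial_cutoff_d1 :: "nat \<Rightarrow> real \<Rightarrow> real \<Rightarrow> real" where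
  "initial_cutoff_d1 m e t = - (cutoff_pow_d1 m (t / e) / e)"

lemma time_cutoff_has_derivative:
  "m \<ge> 3 \<Longrightarrow> R > 0
      \<Longrightarrow> (time_cutoff m R has_real_derivative time_cutoff_d1 m R t) (at t)"
  unfolding time_cutoff_def[abs_def] time_cutoff_d1_def
  using DERIV_compose_divide[OF _ cutoff_pow_has_derivative, of "R^2" m t] by simp

lemma initial_cutoff_has_derivative:
  assumes "m \<ge> 3" "e > 0"
  shows "(initial_cutoff m e has_real_derivative initial_cutoff_d1 m e t) (at t)"
proof -
  have "((\<lambda>t. 1 - cutoff_pow m (t / e)) has_real_derivative 0 - cutoff_pow_d1 m (t / e) / e) (at t)"
    using assms by (intro derivative_intros DERIV_compose_divide cutoff_pow_has_derivative) auto
  then show ?thesis unfolding initial_cutoff_def[abs_def] initial_cutoff_d1_def by simp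
qed

lemma continuous_on_time_cutoff: "R > 0 \<Longrightarrow> continuous_on UNIV (time_cutoff m R)"
  unfolding time_cutoff_def[abs_def] by (intro continuous_intros) auto

lemma continuous_on_time_cutoff_d1:
  "R > 0 \<Longrightarrow> continuous_on UNIV (time_cutoff_d1 m R)"
  unfolding time_cutoff_d1_def[abs_def] by (intro continuous_intros) auto

lemma continuous_on_initial_cutoff:
  "e > 0 \<Longrightarrow> continuous_on UNIV (initial_cutoff m e)"
  unfolding initial_cutoff_def[abs_def] by (intro continuous_intros) auto

lemma continuous_on_initial_cutoff_d1:
  "e > 0 \<Longrightarrow> continuous_on UNIV (initial_cutoff_d1 m e)"
  unfolding initial_cutoff_d1_def[abs_def] by (intro continuous_intros) auto

lemma time_cutoff_bounds: "0 \<le> time_cutoff m R t" "time_cutoff m R t \<le> 1"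
  by (simp_all add: time_cutoff_def cutoff_pow_bounds)

lemma initial_cutoff_bounds: "0 \<le> initial_cutoff m e t" "initial_cutoff m e t \<le> 1"
  using cutoff_pow_bounds[of m "t / e"] by (auto simp: initial_cutoff_def)

lemma time_cutoff_le:
  "m \<ge> 2 \<Longrightarrow> time_cutoff m R t \<le> cutoff (t / R^2) ^ (m - 2)"
  using cutoff_bounds[of "t / R^2"] by (simp add: time_cutoff_def cutoff_pow_eq power_decreasing)

lemma abs_time_cutoff_d1_le:
  "m \<ge> 3 \<Longrightarrow> R > 0
      \<Longrightarrow> \<bar>time_cutoff_d1 m R t\<bar>
      \<le> (48 * real m ^ 2 / R^2) * cutoff (t / R^2) ^ (m - 2)"
  using cutoff_pow_d1_bound[of m "t / R^2"] by (simp add: time_cutoff_d1_def abs_divide field_simps)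

lemma abs_initial_cutoff_d1_le:
  "m \<ge> 3 \<Longrightarrow> e > 0
      \<Longrightarrow> \<bar>initial_cutoff_d1 m e t\<bar> \<le> 48 * real m ^ 2 / e"
proof -
  assume m: "m \<ge> 3" and e: "e > 0"
  have "48 * real m ^ 2 * cutoff (t / e) ^ (m - 2) \<le> 48 * real m ^ 2"
    using cutoff_bounds[of "t / e"] by (intro mult_left_le power_le_one) auto
  then have "\<bar>cutoff_pow_d1 m (t / e)\<bar> \<le> 48 * real m ^ 2"
    using cutoff_pow_d1_bound[OF m, of "t / e"] by linarith
  then show ?thesis using e by (simp add: initial_cutoff_d1_def abs_divide divide_right_mono)
qed

lemma initial_cutoff_d1_nonneg:
  "m \<ge> 3 \<Longrightarrow> e > 0 \<Longrightarrow> 0 \<le> t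
      \<Longrightarrow> 0 \<le> initial_cutoff_d1 m e t"
  using cutoff_pow_d1_nonpos[of m "t / e"] by (simp add: initial_cutoff_d1_def divide_nonpos_pos)

lemma time_cutoff_eq_1:
  "m \<ge> 3 \<Longrightarrow> \<bar>t\<bar> \<le> R^2 \<Longrightarrow> R > 0
      \<Longrightarrow> time_cutoff m R t = 1"
  using cutoff_pow_plateau[of m "t / R^2"] by (simp add: time_cutoff_def abs_divide divide_le_eq_1)

lemma time_cutoff_d1_eq_0:
  "m \<ge> 3 \<Longrightarrow> \<bar>t\<bar> \<le> R^2 \<Longrightarrow> R > 0
      \<Longrightarrow> time_cutoff_d1 m R t = 0"
  using cutoff_pow_plateau[of m "t / R^2"] by (simp add: time_cutoff_d1_def abs_divide divide_le_eq_1)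

lemma time_cutoff_end:
  "m \<ge> 3 \<Longrightarrow> R > 0 \<Longrightarrow> time_cutoff m R (3 * R^2) = 0"
  using cutoff_eq_0[of 3] by (simp add: time_cutoff_def cutoff_pow_eq)

lemma initial_cutoff_eq_0:
  "m \<ge> 3 \<Longrightarrow> \<bar>t\<bar> \<le> e \<Longrightarrow> e > 0
      \<Longrightarrow> initial_cutoff m e t = 0 \<and> initial_cutoff_d1 m e t = 0"
  using cutoff_pow_plateau[of m "t / e"]
    by (simp add: initial_cutoff_def initial_cutoff_d1_def abs_divide divide_le_eq_1)

lemma initial_cutoff_eq_1:
  "m \<ge> 3 \<Longrightarrow> 2 * e \<le> \<bar>t\<bar> \<Longrightarrow> e > 0
      \<Longrightarrow> initial_cutoff m e t = 1"
  using cutoff_divide_eq_0[of e t] by (simp add: initial_cutoff_def cutoff_pow_eq)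

text \<open>The factor \<open>initial_cutoff m e\<close> removes a neighbourhood of \<open>t = 0\<close>, where the solution
  is not known to be integrable.\<close>

definition time_cutoff_eps :: "nat \<Rightarrow> real \<Rightarrow> real \<Rightarrow> real
    \<Rightarrow> real" where
  "time_cutoff_eps m R e t = time_cutoff m R t * initial_cutoff m e t"

definition time_cutoff_eps_d1 :: "nat \<Rightarrow> real \<Rightarrow> real \<Rightarrow> real
    \<Rightarrow> real" where
  "time_cutoff_eps_d1 m R e t
      = time_cutoff_d1 m R t * initial_cutoff m e t + time_cutoff m R t * initial_cutoff_d1 m e t"

lemma time_cutoff_eps_has_derivative:
  assumes "m \<ge> 3" "R > 0" "e > 0"
  shows "(time_cutoff_eps m R e has_real_derivative time_cutoff_eps_d1 m R e t) (at t)"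
  using DERIV_mult[OF time_cutoff_has_derivative initial_cutoff_has_derivative] assms
  unfolding time_cutoff_eps_def[abs_def] time_cutoff_eps_d1_def by (simp add: algebra_simps)

lemma continuous_on_time_cutoff_eps:
  assumes "R > 0" "e > 0"
  shows "continuous_on UNIV (time_cutoff_eps m R e)" "continuous_on UNIV (time_cutoff_eps_d1 m R e)"
  unfolding time_cutoff_eps_def[abs_def] time_cutoff_eps_d1_def[abs_def]
  using assms by (auto intro!: continuous_intros continuous_on_time_cutoff continuous_on_time_cutoff_d1
      continuous_on_initial_cutoff continuous_on_initial_cutoff_d1)

lemma time_cutoff_eps_nonneg: "0 \<le> time_cutoff_eps m R e t"
  using time_cutoff_bounds initial_cutoff_bounds by (simp add: time_cutoff_eps_def)

definition test_phi :: "nat \<Rightarrow> real \<Rightarrow> (real \<Rightarrow> real) \<Rightarrow>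
    ('n::finite,'k::finite) pt \<Rightarrow> real \<Rightarrow> real" where
  "test_phi m R c z t = c t * theta R z ^ m"

lemma test_phi_eq_sep_fun:
  "test_phi m R c = (\<lambda>z t. sep_fun (c t) (cutoff_scaled m R) (cutoff_scaled m (R^2)) z)"
  by (simp add: test_phi_def sep_fun_cutoff_scaled fun_eq_iff)

lemma test_fun_test_phi:
  assumes m: "m \<ge> 3" and R: "R > 0"
    and c: "\<And>s. (c has_real_derivative c' s) (at s)" "continuous_on UNIV c'" "c (3 * R^2) = 0"
  shows "test_fun (3 * R^2)
    (test_phi m R c :: ('n::finite,'k::finite) pt \<Rightarrow> real \<Rightarrow> real)"
  unfolding test_phi_eq_sep_fun
proof (rule test_fun_sep_fun[where r = "2 * R + 2 * R^2"])
  have R2: "R^2 > 0" using R by simp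
  show "fam_C2 (cutoff_scaled m R :: 'n \<Rightarrow> _)" "fam_C2 (cutoff_scaled m (R^2) :: 'k \<Rightarrow> _)"
    using fam_C2_cutoff_scaled[OF m R] fam_C2_cutoff_scaled[OF m R2] by auto
  show "cutoff_scaled m R i s = 0" if "2 * R + 2 * R^2 \<le> \<bar>s\<bar>" for i :: 'n and s
    using that R2 by (intro cutoff_scaled_eq_0[OF m R]) linarith
  show "cutoff_scaled m (R^2) j s = 0" if "2 * R + 2 * R^2 \<le> \<bar>s\<bar>" for j :: 'k and s
    using that R by (intro cutoff_scaled_eq_0[OF m R2]) linarith
qed (use c R in auto)

lemma dtime_test_phi:
  assumes "\<And>s. (c has_real_derivative c' s) (at s)" "T > 0" "t \<in> {0..T}"
  shows "dtime T (test_phi m R c) z t = c' t * theta R z ^ m"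
  unfolding test_phi_eq_sep_fun dtime_sep_fun[OF assms] by (simp add: sep_fun_cutoff_scaled)

lemma abs_grushin_test_phi_le:
  fixes z :: "('n::finite,'k::finite) pt"
  assumes "m \<ge> 3" "R > 0"
  shows "\<bar>grushin (\<lambda>z. test_phi m R c z t) z\<bar>
    \<le> \<bar>c t\<bar> * (test_const m CARD('n) CARD('k) / R^2) * theta R z ^ (m - 2)"
  unfolding test_phi_eq_sep_fun using abs_grushin_sep_cutoff_le[OF assms] by simp

lemma grushin_test_phi_eq_0:
  fixes z :: "('n::finite,'k::finite) pt"
  assumes "m \<ge> 3" "R > 0" "\<And>i. \<bar>fst z $ i\<bar> \<le> R"
    "\<And>j. \<bar>snd z $ j\<bar> \<le> R^2"
  shows "grushin (\<lambda>z. test_phi m R c z t) z = 0"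
  unfolding test_phi_eq_sep_fun using grushin_sep_cutoff_eq_0[OF assms] by simp

lemma grushin_test_phi_measurable:
  fixes c :: "real \<Rightarrow> real"
  assumes m: "m \<ge> 3" and R: "R > 0" and c: "continuous_on UNIV c"
  shows "(\<lambda>w. grushin (\<lambda>z. test_phi m R c z (snd w)) (fst w) :: real) \<in>
    borel_measurable (lborel :: (('n::finite,'k::finite) pt \<times> real) measure)"
proof -
  have R2: "R^2 > 0" using R by simp
  let ?h = "cutoff_scaled m R :: 'n \<Rightarrow> real \<Rightarrow> real" and ?k =
      "cutoff_scaled m (R^2) :: 'k \<Rightarrow> real \<Rightarrow> real"
  have sep: "continuous_on UNIV (\<lambda>w. sep_fun (c (snd w)) h k (fst w))"
    if "fam_continuous h"
        "fam_continuous k" for h :: "'n \<Rightarrow> real \<Rightarrow> real"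
        and k :: "'k \<Rightarrow> real \<Rightarrow> real"
  proof -
    have "continuous_on (UNIV \<times> UNIV) (\<lambda>(z, t). sep_fun (c t) h k z)"
      using that by (intro continuous_on_sep_fun c) (auto simp: fam_continuous_def)
    then show ?thesis by (simp add: case_prod_beta')
  qed
  have "grushin (\<lambda>z. test_phi m R c z (snd w)) (fst w) =
     (\<Sum>a\<in>UNIV. sep_fun (c (snd w)) (?h(a := cutoff_scaled_d2 m R a)) ?k (fst w))
       + (norm (fst (fst w)))\<^sup>2
           * (\<Sum>b\<in>UNIV. sep_fun (c (snd w)) ?h (?k(b := cutoff_scaled_d2 m (R^2) b)) (fst w))"
    for w :: "('n,'k) pt \<times> real"
    unfolding test_phi_eq_sep_fun
    by (rule grushin_sep_cutoff[OF m R])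
  moreover have "continuous_on UNIV
      (\<lambda>w. (\<Sum>a\<in>UNIV. sep_fun (c (snd w)) (?h(a := cutoff_scaled_d2 m R a)) ?k (fst w))
       + (norm (fst (fst w)))\<^sup>2
           * (\<Sum>b\<in>UNIV. sep_fun (c (snd w)) ?h (?k(b := cutoff_scaled_d2 m (R^2) b)) (fst w)))"
    using fam_continuous_cutoff_scaled[OF R, of m] fam_continuous_cutoff_scaled[OF R2, of m]
    by (intro continuous_intros sep fam_continuous_upd) (auto simp: fam_continuous_def)
  ultimately show ?thesis by (simp add: borel_measurable_continuous_onI)
qed

definition slab :: "real \<Rightarrow> (('n::finite,'k::finite) pt \<times> real) set" where
  "slab T = UNIV \<times> {0<..<T}"

lemma mem_slab: "w \<in> slab T \<longleftrightarrow> 0 < snd w \<and> snd w < T"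
  by (cases w) (simp add: slab_def)

lemma slab_sets [measurable]: "slab T \<in> sets lborel"
proof -
  have "open (slab T)" unfolding slab_def by (intro open_Times) auto
  from borel_open[OF this] show ?thesis by simp
qed

definition test_weight :: "nat \<Rightarrow> real \<Rightarrow>
    (real \<Rightarrow> real) \<Rightarrow> ('n::finite,'k::finite) pt \<times> real \<Rightarrow> real" where
  "test_weight m R c w = indicator (slab (3 * R^2)) w * (c (snd w) * theta R (fst w) ^ m)"

definition test_grushin :: "nat \<Rightarrow> real \<Rightarrow>
    (real \<Rightarrow> real) \<Rightarrow> ('n::finite,'k::finite) pt \<times> real \<Rightarrow> real" where
  "test_grushin m R c w = indicator (slab (3 * R^2)) w * grushin (\<lambda>z. test_phi m R c z (snd w)) (fst w)"

lemma test_weight_measurable: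
  assumes R: "R > 0" and c: "continuous_on UNIV c"
  shows "test_weight m R c \<in> borel_measurable
    (lborel :: (('n::finite,'k::finite) pt \<times> real) measure)"
proof -
  have "continuous_on UNIV (\<lambda>w. c (snd w) * theta R (fst w :: ('n::finite,'k::finite) pt) ^ m)"
    by (intro continuous_intros continuous_on_compose2[OF c]
      continuous_on_compose2[OF continuous_on_theta[OF R]])
       auto
  then have "(\<lambda>w. c (snd w) * theta R (fst w :: ('n::finite,'k::finite) pt) ^ m) \<in>
      borel_measurable lborel"
    by (simp add: borel_measurable_continuous_onI)
  then show ?thesis unfolding test_weight_def[abs_def]
    by (rule borel_measurable_times[OF borel_measurable_indicator[OF slab_sets]])
qed

lemma test_grushin_measurable:
  "m \<ge> 3 \<Longrightarrow> R > 0 \<Longrightarrow> continuous_on UNIV c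
      \<Longrightarrow> test_grushin m R c \<in> borel_measurable lborel"
  unfolding test_grushin_def[abs_def]
  by (intro borel_measurable_times borel_measurable_indicator slab_sets grushin_test_phi_measurable)

lemma test_weight_nonneg: "(\<And>t. 0 \<le> c t) \<Longrightarrow> 0 \<le> test_weight m R c w"
  using theta_bounds(1)[of R "fst w"] by (simp add: test_weight_def)

lemma test_weight_time_cutoff_eps_eq_1:
  assumes m: "m \<ge> 3" and R: "R > 0" and e: "e > 0"
    and w: "w \<in> st_box R (R^2)" "2 * e \<le> snd w"
  shows "test_weight m R (time_cutoff_eps m R e) w = 1"
proof -
  have R2: "R^2 > 0" using R by simp
  have t: "0 < snd w" "snd w \<le> R^2" using w e by (auto simp: mem_st_box)
  then have "w \<in> slab (3 * R^2)" using R2 by (simp add: mem_slab)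
  moreover have "theta R (fst w) = 1" using w(1) R by (intro theta_eq_1) (auto simp: mem_st_box)
  moreover have "time_cutoff m R (snd w) = 1" using t R by (intro time_cutoff_eq_1[OF m]) auto
  moreover have "initial_cutoff m e (snd w) = 1" using w(2) t e by (intro initial_cutoff_eq_1[OF m]) auto
  ultimately show ?thesis by (simp add: test_weight_def time_cutoff_eps_def)
qed

section \<open>Pointwise estimates\<close>

text \<open>Young's inequality with exponents \<open>p\<close> and \<open>p/(p-1)\<close> for the product
  \<open>(\<delta>\<^bsup>1/p\<^esup> U \<Theta>\<^bsup>m/p\<^esup>) (\<delta>\<^bsup>-1/p\<^esup> A)\<close>;
  the hypothesis \<open>m - 2 \<ge> m/p\<close> gives \<open>\<Theta>\<^bsup>m-2\<^esup> \<le> \<Theta>\<^bsup>m/p\<^esup>\<close>.\<close>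

lemma young_absorb:
  fixes p U A \<Theta> \<delta> :: real
  assumes p: "p > 1" and U: "U \<ge> 0" and A: "A \<ge> 0" and theta: "0 \<le> \<Theta>"
    "\<Theta> \<le> 1" and d: "\<delta> > 0"
    and m: "m \<ge> 3" "real m - 2 \<ge> real m / p"
  shows "U * A * \<Theta> ^ (m - 2)
    \<le> \<delta> * (U powr p * \<Theta> ^ m) + \<delta> powr (- 1 / (p - 1)) * A powr (p / (p - 1))"
proof (cases "\<Theta> = 0 \<or> U = 0 \<or> A = 0")
  case True
  have "0 \<le> \<delta> * (U powr p * \<Theta> ^ m) + \<delta> powr (- 1 / (p - 1)) * A powr (p / (p - 1))"
    using d theta by (intro add_nonneg_nonneg mult_nonneg_nonneg) auto
  moreover have "U * A * \<Theta> ^ (m - 2) = 0" using True m by auto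
  ultimately show ?thesis by linarith
next
  case False
  then have Tp: "\<Theta> > 0" and Up: "U > 0" and Ap: "A > 0" using theta U A by auto
  define q where "q = p / (p - 1)"
  have q: "q > 1" "1 / p + 1 / q = 1" using p by (auto simp: q_def field_simps)
  have "\<Theta> ^ (m - 2) = \<Theta> powr (real (m - 2))" using Tp by (simp add: powr_realpow)
  also have "\<dots> \<le> \<Theta> powr (real m / p)"
    using Tp theta m by (intro powr_mono') (auto simp: of_nat_diff)
  finally have T1: "\<Theta> ^ (m - 2) \<le> \<Theta> powr (real m / p)" .
  define a where "a = \<delta> powr (1 / p) * U * \<Theta> powr (real m / p)"
  define b where "b = \<delta> powr (- 1 / p) * A"
  have dd: "\<delta> powr (1 / p) * \<delta> powr (- 1 / p) = 1"
    using d by (simp add: powr_add[symmetric])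
  have ab: "a * b = U * A * \<Theta> powr (real m / p)"
    unfolding a_def b_def using dd by (simp add: algebra_simps)
  have a0: "a \<ge> 0" and b0: "b \<ge> 0" using U A by (auto simp: a_def b_def)
  have Y: "a * b \<le> a powr p / p + b powr q / q"
    by (rule Youngs_inequality[OF p q(1) q(2) a0 b0])
  have ap: "a powr p = \<delta> * (U powr p * \<Theta> ^ m)"
    using d Up Tp p by (simp add: a_def powr_mult powr_powr powr_realpow)
  have bq: "b powr q = \<delta> powr (- 1 / (p - 1)) * A powr (p / (p - 1))"
    using d Ap p by (simp add: b_def q_def powr_mult powr_powr field_simps)
  have le_self: "x / r \<le> x" if "0 \<le> x" "1 \<le> r" for x r :: real
    using that mult_left_mono[of 1 r x] by (simp add: divide_le_eq)
  have "a powr p / p \<le> a powr p" "b powr q / q \<le> b powr q"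
    using p q by (auto intro: le_self)
  then have "a * b \<le> a powr p + b powr q" using Y by linarith
  moreover have "U * A * \<Theta> ^ (m - 2) \<le> a * b" unfolding ab
      using T1 U A by (intro mult_left_mono) auto
  ultimately show ?thesis unfolding ap bq by linarith
qed

definition psi :: "real \<Rightarrow> ('n::finite,'k::finite) pt \<times> real \<Rightarrow> real" where
  "psi R w = cutoff (snd w / R^2) * theta R (fst w)"

lemma psi_bounds: "0 \<le> psi R w" "psi R w \<le> 1"
  unfolding psi_def using cutoff_bounds[of "snd w / R^2"] theta_bounds[of R "fst w"]
  by (auto intro: mult_le_one)

lemma psi_power: "psi R w ^ n = cutoff (snd w / R^2) ^ n * theta R (fst w) ^ n"
  by (simp add: psi_def power_mult_distrib)

lemma psi_nonzero_imp_mem_st_box: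
  assumes R: "R > 0" and nz: "psi R w \<noteq> 0"
  shows "w \<in> st_box (2 * R) (2 * R^2)"
proof -
  have R2: "R^2 > 0" using R by simp
  have q: "cutoff (snd w / R^2) \<noteq> 0" and th: "theta R (fst w) \<noteq> 0"
    using nz by (auto simp: psi_def)
  have x: "\<bar>fst (fst w) $ i\<bar> \<le> 2 * R" for i
  proof (rule ccontr)
    assume "\<not> ?thesis"
    then have "cutoff (fst (fst w) $ i / R) = 0" using cutoff_divide_eq_0[OF R] by force
    then have "(\<Prod>i\<in>UNIV. cutoff (fst (fst w) $ i / R)) = 0" by (intro prod_zero) auto
    then show False using th by (simp add: theta_def)
  qed
  have y: "\<bar>snd (fst w) $ j\<bar> \<le> 2 * R^2" for j
  proof (rule ccontr)
    assume "\<not> ?thesis"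
    then have "cutoff (snd (fst w) $ j / R^2) = 0" using cutoff_divide_eq_0[OF R2] by force
    then have "(\<Prod>j\<in>UNIV. cutoff (snd (fst w) $ j / R^2)) = 0" by (intro prod_zero) auto
    then show False using th by (simp add: theta_def)
  qed
  have "\<bar>snd w\<bar> \<le> 2 * R^2" using q cutoff_divide_eq_0[OF R2, of "snd w"] by force
  with x y show ?thesis by (simp add: mem_st_box)
qed

lemma young_psi:
  fixes w :: "('n::finite,'k::finite) pt \<times> real"
  assumes p: "p > 1" and m: "m \<ge> 3" "real m - 2 \<ge> real m / p"
    and U: "U \<ge> 0" and A: "A \<ge> 0" and \<delta>: "\<delta> > 0" and R: "R > 0"
  shows "U * A * psi R w ^ (m - 2) \<le> \<delta> * (U powr p * psi R w ^ m)
          + \<delta> powr (- 1 / (p - 1)) * A powr (p / (p - 1)) * indicator (st_box (2 * R) (2 * R^2)) w"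
proof (cases "psi R w = 0")
  case True
  have "0 \<le> \<delta> * (U powr p * psi R w ^ m) +
      \<delta> powr (- 1 / (p - 1)) * A powr (p / (p - 1)) * indicator (st_box (2 * R) (2 * R^2)) w"
    using \<delta> psi_bounds[of R w] by (intro add_nonneg_nonneg mult_nonneg_nonneg) auto
  moreover have "U * A * psi R w ^ (m - 2) = 0" using True m by simp
  ultimately show ?thesis by linarith
next
  case False
  then have "w \<in> st_box (2 * R) (2 * R^2)" using psi_nonzero_imp_mem_st_box[OF R] by blast
  then show ?thesis using young_absorb[OF p U A psi_bounds \<delta> m] by simp
qed

lemma abs_time_cutoff_d1_theta_le:
  fixes w :: "('n::finite,'k::finite) pt \<times> real"
  assumes "m \<ge> 3" "R > 0"
  shows "\<bar>time_cutoff_d1 m R (snd w) * theta R (fst w) ^ m\<bar>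
           \<le> test_const m CARD('n) CARD('k) / R^2 * psi R w ^ (m - 2)"
proof -
  let ?q = "cutoff (snd w / R^2)" and ?th = "theta R (fst w)"
  have th: "0 \<le> ?th" "?th \<le> 1" by (rule theta_bounds)+
  have "\<bar>time_cutoff_d1 m R (snd w) * ?th ^ m\<bar> = \<bar>time_cutoff_d1 m R (snd w)\<bar> * ?th ^ m"
    using th by (simp add: abs_mult)
  also have "\<dots> \<le> ((48 * real m ^ 2 / R^2) * ?q ^ (m - 2)) * ?th ^ (m - 2)"
    using th cutoff_bounds[of "snd w / R^2"]
    by (intro mult_mono abs_time_cutoff_d1_le assms power_decreasing) auto
  also have "\<dots> \<le> (test_const m CARD('n) CARD('k) / R^2 * ?q ^ (m - 2)) * ?th ^ (m - 2)"
    using th cutoff_bounds[of "snd w / R^2"]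
    by (intro mult_right_mono divide_right_mono test_const_ge) auto
  finally show ?thesis by (simp add: psi_power)
qed

lemma abs_grushin_test_phi_psi_le:
  fixes w :: "('n::finite,'k::finite) pt \<times> real"
  assumes "m \<ge> 3" "R > 0" and c: "\<bar>c (snd w)\<bar> \<le> cutoff (snd w / R^2) ^ (m - 2) * h"
  shows "\<bar>grushin (\<lambda>z. test_phi m R c z (snd w)) (fst w)\<bar>
           \<le> test_const m CARD('n) CARD('k) / R^2 * psi R w ^ (m - 2) * h"
proof -
  have "\<bar>grushin (\<lambda>z. test_phi m R c z (snd w)) (fst w)\<bar>
      \<le> \<bar>c (snd w)\<bar> * (test_const m CARD('n) CARD('k) / R^2) * theta R (fst w) ^ (m - 2)"
    by (rule abs_grushin_test_phi_le[OF assms(1,2)])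
  also have "\<dots> \<le> (cutoff (snd w / R^2) ^ (m - 2) * h) * (test_const m CARD('n) CARD('k) / R^2)
                    * theta R (fst w) ^ (m - 2)"
    using c theta_bounds[of R "fst w"] test_const_nonneg by (intro mult_right_mono) auto
  finally show ?thesis by (simp add: psi_power ac_simps)
qed

lemma eps_derivative_terms_le:
  fixes w :: "('n::finite,'k::finite) pt \<times> real"
  assumes m: "m \<ge> 3" and R: "R > 0" and e: "e > 0" and t: "snd w > 0"
  defines "A \<equiv> test_const m CARD('n) CARD('k) / R^2"
  shows "- (grushin (\<lambda>z. test_phi m R (time_cutoff_eps m R e) z (snd w)) (fst w)
            + time_cutoff_eps_d1 m R e (snd w) * theta R (fst w) ^ m)
         \<le> 2 * A * psi R w ^ (m - 2) * initial_cutoff m e (snd w)"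
proof -
  let ?h = "initial_cutoff m e (snd w)" and ?th = "theta R (fst w)"
  have h: "0 \<le> ?h" "?h \<le> 1" by (rule initial_cutoff_bounds)+
  have "\<bar>time_cutoff_eps m R e (snd w)\<bar> \<le> cutoff (snd w / R^2) ^ (m - 2) * ?h"
    using time_cutoff_le[of m R "snd w"] time_cutoff_bounds[of m R "snd w"] h m
    by (simp add: time_cutoff_eps_def abs_mult mult_right_mono)
  then have "\<bar>grushin (\<lambda>z. test_phi m R (time_cutoff_eps m R e) z (snd w)) (fst w)\<bar>
      \<le> A * psi R w ^ (m - 2) * ?h"
    unfolding A_def by (rule abs_grushin_test_phi_psi_le[OF m R])
  moreover have "0 \<le> time_cutoff m R (snd w) * initial_cutoff_d1 m e (snd w) * ?th ^ m"
    using initial_cutoff_d1_nonneg[OF m e] t time_cutoff_bounds[of m R "snd w"] theta_bounds[of R "fst w"]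
    by simp
  moreover have "\<bar>time_cutoff_d1 m R (snd w) * ?th ^ m\<bar> * ?h \<le> A * psi R w ^ (m - 2) * ?h"
    unfolding A_def by (intro mult_right_mono abs_time_cutoff_d1_theta_le m R h(1))
  moreover have "- (time_cutoff_d1 m R (snd w) * ?th ^ m * ?h)
      \<le> \<bar>time_cutoff_d1 m R (snd w) * ?th ^ m\<bar> * ?h"
    using h(1) by (metis abs_ge_minus_self minus_mult_left mult_right_mono)
  ultimately show ?thesis
    using abs_ge_minus_self[of "grushin (\<lambda>z. test_phi m R (time_cutoff_eps m R e) z (snd w)) (fst w)"]
    unfolding time_cutoff_eps_d1_def by (simp add: algebra_simps)
qed

lemma eps_pointwise_bound:
  fixes w :: "('n::finite,'k::finite) pt \<times> real"
  assumes p: "p > 1" and m: "m \<ge> 3" "real m - 2 \<ge> real m / p"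
    and R: "R > 0" and e: "e > 0" and t: "snd w > 0" and U: "U \<ge> 0"
  defines "A \<equiv> test_const m CARD('n) CARD('k) / R^2"
  shows "- (U * grushin (\<lambda>z. test_phi m R (time_cutoff_eps m R e) z (snd w)) (fst w)
            + U * (time_cutoff_eps_d1 m R e (snd w) * theta R (fst w) ^ m))
         \<le> 1/2 * (U powr p * (time_cutoff_eps m R e (snd w) * theta R (fst w) ^ m))
           + 2 powr (1 / (p - 1)) * (2 * A) powr (p / (p - 1)) * indicator (st_box (2 * R) (2 * R^2)) w"
proof -
  let ?h = "initial_cutoff m e (snd w)"
  let ?K = "(1/2) powr (- 1 / (p - 1)) * (2 * A) powr (p / (p - 1)) * indicator (st_box (2 * R) (2 * R^2)) w"
  have h: "0 \<le> ?h" "?h \<le> 1" by (rule initial_cutoff_bounds)+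
  have A: "A \<ge> 0" by (simp add: A_def test_const_nonneg)
  have "- (U * grushin (\<lambda>z. test_phi m R (time_cutoff_eps m R e) z (snd w)) (fst w)
            + U * (time_cutoff_eps_d1 m R e (snd w) * theta R (fst w) ^ m))
      = U * - (grushin (\<lambda>z. test_phi m R (time_cutoff_eps m R e) z (snd w)) (fst w)
            + time_cutoff_eps_d1 m R e (snd w) * theta R (fst w) ^ m)"
    by (simp add: algebra_simps)
  also have "\<dots> \<le> U * (2 * A) * psi R w ^ (m - 2) * ?h"
    using mult_left_mono[OF eps_derivative_terms_le[OF m(1) R e t] U] by (simp add: A_def mult.assoc)
  also have "\<dots> \<le> (1/2 * (U powr p * psi R w ^ m) + ?K) * ?h"
    using young_psi[OF p m U _ _ R, of "2 * A" "1/2" w] A h by (intro mult_right_mono) auto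
  also have "\<dots> \<le> 1/2 * (U powr p * psi R w ^ m * ?h) + ?K"
    using h A by (simp add: algebra_simps indicator_def mult_left_le_one_le)
  also have "(1/2 :: real) powr (- 1 / (p - 1)) = 2 powr (1 / (p - 1))"
    by (simp add: powr_minus_divide powr_divide)
  also have "U powr p * psi R w ^ m * ?h = U powr p * (time_cutoff_eps m R e (snd w) * theta R (fst w) ^ m)"
    by (simp add: psi_power time_cutoff_eps_def time_cutoff_def cutoff_pow_eq)
  finally show ?thesis .
qed

lemma main_pointwise_bound:
  fixes w :: "('n::finite,'k::finite) pt \<times> real"
  assumes p: "p > 1" and m: "m \<ge> 3" "real m - 2 \<ge> real m / p"
    and R: "R > 0" and \<delta>: "\<delta> > 0" and U: "U \<ge> 0"
  defines "B \<equiv> \<delta> * (U powr p * indicator (- st_box R (R^2)) w)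
      + \<delta> powr (- 1 / (p - 1)) * (test_const m CARD('n) CARD('k) / R^2) powr (p / (p - 1))
        * indicator (st_box (2 * R) (2 * R^2)) w"
  shows "\<bar>U * grushin (\<lambda>z. test_phi m R (time_cutoff m R) z (snd w)) (fst w)\<bar> \<le> B"
    and "\<bar>U * (time_cutoff_d1 m R (snd w) * theta R (fst w) ^ m)\<bar> \<le> B"
proof -
  define A where "A = test_const m CARD('n) CARD('k) / R^2"
  have A: "A \<ge> 0" by (simp add: A_def test_const_nonneg)
  have B: "B \<ge> 0" using \<delta> by (simp add: B_def)
  have "\<bar>U * grushin (\<lambda>z. test_phi m R (time_cutoff m R) z (snd w)) (fst w)\<bar> \<le> B \<and>
        \<bar>U * (time_cutoff_d1 m R (snd w) * theta R (fst w) ^ m)\<bar> \<le> B"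
  proof (cases "w \<in> st_box R (R^2)")
    case True
    then have "grushin (\<lambda>z. test_phi m R (time_cutoff m R) z (snd w)) (fst w) = 0"
      "time_cutoff_d1 m R (snd w) = 0"
      using grushin_test_phi_eq_0[OF m(1) R, of "fst w"] time_cutoff_d1_eq_0[OF m(1) _ R]
      by (auto simp: mem_st_box)
    then show ?thesis using B by simp
  next
    case False
    have "U * A * psi R w ^ (m - 2) \<le> \<delta> * (U powr p * psi R w ^ m)
        + \<delta> powr (- 1 / (p - 1)) * A powr (p / (p - 1)) * indicator (st_box (2 * R) (2 * R^2)) w"
      by (rule young_psi[OF p m U A \<delta> R])
    also have "\<dots> \<le> B"
      using False \<delta> U psi_bounds[of R w] by (simp add: B_def A_def mult_left_le power_le_one)
    finally have Y: "U * A * psi R w ^ (m - 2) \<le> B" .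
    have "\<bar>time_cutoff m R (snd w)\<bar> \<le> cutoff (snd w / R^2) ^ (m - 2) * 1"
      using time_cutoff_le[of m R "snd w"] time_cutoff_bounds[of m R "snd w"] m(1) by simp
    then have "\<bar>grushin (\<lambda>z. test_phi m R (time_cutoff m R) z (snd w)) (fst w)\<bar>
        \<le> A * psi R w ^ (m - 2)"
      unfolding A_def using abs_grushin_test_phi_psi_le[OF m(1) R] by fastforce
    moreover have "\<bar>time_cutoff_d1 m R (snd w) * theta R (fst w) ^ m\<bar> \<le> A * psi R w ^ (m - 2)"
      unfolding A_def by (rule abs_time_cutoff_d1_theta_le[OF m(1) R])
    ultimately have "U
        * \<bar>grushin (\<lambda>z. test_phi m R (time_cutoff m R) z (snd w)) (fst w)\<bar>
        \<le> U * A * psi R w ^ (m - 2)"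
      "U * \<bar>time_cutoff_d1 m R (snd w) * theta R (fst w) ^ m\<bar> \<le> U * A * psi R w ^ (m - 2)"
      using mult_left_mono[OF _ U] by (auto simp: mult.assoc)
    with Y show ?thesis by (simp add: abs_mult abs_of_nonneg[OF U])
  qed
  then show "\<bar>U * grushin (\<lambda>z. test_phi m R (time_cutoff m R) z (snd w)) (fst w)\<bar> \<le> B"
    "\<bar>U * (time_cutoff_d1 m R (snd w) * theta R (fst w) ^ m)\<bar> \<le> B" by auto
qed

lemma time_cutoff_eps_vanish:
  fixes w :: "('n::finite,'k::finite) pt \<times> real"
  assumes m: "m \<ge> 3" and R: "R > 0" and e: "e > 0" and t: "snd w > 0"
    and out: "\<not> (w \<in> st_box (2 * R) (2 * R^2) \<and> e \<le> snd w)"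
  shows "time_cutoff_eps m R e (snd w) * theta R (fst w) ^ (m - 2) = 0"
    and "time_cutoff_eps_d1 m R e (snd w) * theta R (fst w) ^ m = 0"
proof -
  have "time_cutoff_eps m R e (snd w) = 0 \<and> time_cutoff_eps_d1 m R e (snd w) = 0 \<or> theta R (fst w) = 0"
  proof (cases "snd w < e")
    case True
    then show ?thesis using initial_cutoff_eq_0[OF m, of "snd w" e] t e
      by (simp add: time_cutoff_eps_def time_cutoff_eps_d1_def)
  next
    case False
    then have "psi R w = 0" using out psi_nonzero_imp_mem_st_box[OF R, of w] by auto
    then consider "theta R (fst w) = 0" | "cutoff (snd w / R^2) = 0" by (auto simp: psi_def)
    then show ?thesis
    proof cases
      case 2
      moreover have "cutoff (snd w / R^2) ^ (m - 2) = 0" "cutoff (snd w / R^2) ^ m = 0"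
        using 2 m by simp_all
      ultimately have "time_cutoff m R (snd w) = 0" "time_cutoff_d1 m R (snd w) = 0"
        using abs_time_cutoff_d1_le[OF m R, of "snd w"] m
          by (simp_all add: time_cutoff_def cutoff_pow_eq zero_power)
      then show ?thesis by (simp add: time_cutoff_eps_def time_cutoff_eps_d1_def)
    qed simp
  qed
  then show "time_cutoff_eps m R e (snd w) * theta R (fst w) ^ (m - 2) = 0"
    "time_cutoff_eps_d1 m R e (snd w) * theta R (fst w) ^ m = 0"
    using m by auto
qed

lemma eps_integrands_vanish:
  fixes w :: "('n::finite,'k::finite) pt \<times> real"
  assumes "m \<ge> 3" "R > 0" "e > 0" "\<not> (w \<in> st_box (2 * R) (2 * R^2) \<and> e \<le> snd w)"
  shows "test_weight m R (time_cutoff_eps m R e) w = 0"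
    and "test_grushin m R (time_cutoff_eps m R e) w = 0"
    and "test_weight m R (time_cutoff_eps_d1 m R e) w = 0"
proof -
  have "test_weight m R (time_cutoff_eps m R e) w = 0 \<and> test_grushin m R (time_cutoff_eps m R e) w = 0
      \<and> test_weight m R (time_cutoff_eps_d1 m R e) w = 0"
  proof (cases "w \<in> slab (3 * R^2)")
    case True
    then have t: "snd w > 0" by (simp add: mem_slab)
    note vanish = time_cutoff_eps_vanish[OF assms(1-3) t assms(4)]
    have "\<bar>time_cutoff_eps m R e (snd w)\<bar> * theta R (fst w) ^ (m - 2)
        = \<bar>time_cutoff_eps m R e (snd w) * theta R (fst w) ^ (m - 2)\<bar>"
      using theta_bounds(1)[of R "fst w"] by (simp add: abs_mult)
    then have z: "\<bar>time_cutoff_eps m R e (snd w)\<bar> * theta R (fst w) ^ (m - 2) = 0"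
      using vanish(1) by simp
    have "\<bar>grushin (\<lambda>z. test_phi m R (time_cutoff_eps m R e) z (snd w)) (fst w)\<bar>
        \<le> \<bar>time_cutoff_eps m R e (snd w)\<bar> * (test_const m CARD('n) CARD('k) / R^2)
            * theta R (fst w) ^ (m - 2)"
      by (rule abs_grushin_test_phi_le[OF assms(1,2)])
    also have "\<dots> = (test_const m CARD('n) CARD('k) / R^2)
        * (\<bar>time_cutoff_eps m R e (snd w)\<bar> * theta R (fst w) ^ (m - 2))"
      by (simp only: ac_simps)
    finally have "\<bar>grushin (\<lambda>z. test_phi m R (time_cutoff_eps m R e) z (snd w))
        (fst w)\<bar> \<le> 0"
      by (simp only: z mult_zero_right)
    moreover have "m - 2 + 2 = m"
      using assms(1) by simp
    then have "theta R (fst w) ^ m = theta R (fst w) ^ (m - 2) * theta R (fst w) ^ 2"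
      by (simp only: power_add[symmetric])
    then have "time_cutoff_eps m R e (snd w) * theta R (fst w) ^ m = 0"
      using vanish(1) by (simp add: mult.assoc[symmetric])
    ultimately show ?thesis using vanish(2) by (simp add: test_weight_def test_grushin_def)
  qed (simp add: test_weight_def test_grushin_def)
  then show "test_weight m R (time_cutoff_eps m R e) w = 0" "test_grushin m R (time_cutoff_eps m R e) w = 0"
    "test_weight m R (time_cutoff_eps_d1 m R e) w = 0" by auto
qed

lemma eps_integrands_bounded:
  fixes w :: "('n::finite,'k::finite) pt \<times> real"
  assumes m: "m \<ge> 3" and R: "R > 0" and e: "e > 0"
  shows "\<bar>test_weight m R (time_cutoff_eps m R e) w\<bar> \<le> 1"
    and "\<bar>test_grushin m R (time_cutoff_eps m R e) w\<bar> \<le> test_const m CARD('n) CARD('k) / R^2"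
    and "\<bar>test_weight m R (time_cutoff_eps_d1 m R e) w\<bar>
      \<le> 48 * real m ^ 2 / R^2 + 48 * real m ^ 2 / e"
proof -
  have th: "0 \<le> theta R (fst w) ^ n" "theta R (fst w) ^ n \<le> 1" for n
    using theta_bounds[of R "fst w"] by (auto intro: power_le_one)
  have c: "\<bar>time_cutoff_eps m R e t\<bar> \<le> 1" for t
    using time_cutoff_bounds[of m R t] initial_cutoff_bounds[of m e t]
    by (simp add: time_cutoff_eps_def abs_mult mult_le_one)
  have "\<bar>time_cutoff_d1 m R t\<bar> \<le> 48 * real m ^ 2 / R^2" for t
  proof -
    have "48 * real m ^ 2 / R^2 * cutoff (t / R^2) ^ (m - 2) \<le> 48 * real m ^ 2 / R^2"
      using cutoff_bounds[of "t / R^2"] by (intro mult_left_le power_le_one) auto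
    then show ?thesis using abs_time_cutoff_d1_le[OF m R, of t] by linarith
  qed
  then have c1: "\<bar>time_cutoff_eps_d1 m R e t\<bar> \<le> 48 * real m ^ 2 / R^2 + 48 * real m ^ 2 / e" for t
  proof -
    have "\<bar>time_cutoff_eps_d1 m R e t\<bar>
        \<le> \<bar>time_cutoff_d1 m R t\<bar> * \<bar>initial_cutoff m e t\<bar>
            + \<bar>time_cutoff m R t\<bar> * \<bar>initial_cutoff_d1 m e t\<bar>"
      unfolding time_cutoff_eps_d1_def by (simp add: abs_mult[symmetric] abs_triangle_ineq)
    also have "\<dots> \<le> (48 * real m ^ 2 / R^2) * 1 + 1 * (48 * real m ^ 2 / e)"
      using \<open>\<bar>time_cutoff_d1 m R t\<bar>
        \<le> 48 * real m ^ 2 / R^2\<close> abs_initial_cutoff_d1_le[OF m e, of t]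
        initial_cutoff_bounds[of m e t] time_cutoff_bounds[of m R t]
      by (intro add_mono mult_mono) auto
    finally show ?thesis by simp
  qed
  have ind: "\<bar>indicator S w * x\<bar> \<le> \<bar>x\<bar>" for S and x :: real
    by (simp add: indicator_def)
  have "\<bar>grushin (\<lambda>z. test_phi m R (time_cutoff_eps m R e) z (snd w)) (fst w)\<bar>
      \<le> \<bar>time_cutoff_eps m R e (snd w)\<bar> * (test_const m CARD('n) CARD('k) / R^2)
          * theta R (fst w) ^ (m - 2)"
    by (rule abs_grushin_test_phi_le[OF m R])
  also have "\<dots> \<le> 1 * (test_const m CARD('n) CARD('k) / R^2) * 1"
    using c th test_const_nonneg by (intro mult_mono) auto
  finally show "\<bar>test_grushin m R (time_cutoff_eps m R e) w\<bar>
      \<le> test_const m CARD('n) CARD('k) / R^2"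
    by (simp add: test_grushin_def abs_mult indicator_def test_const_nonneg)
  show "\<bar>test_weight m R (time_cutoff_eps m R e) w\<bar> \<le> 1"
    using c th by (simp add: test_weight_def abs_mult indicator_def mult_le_one)
  have "\<bar>time_cutoff_eps_d1 m R e (snd w) * theta R (fst w) ^ m\<bar>
      \<le> \<bar>time_cutoff_eps_d1 m R e (snd w)\<bar>"
    using th[of m] by (simp add: abs_mult mult_right_le_one_le)
  then show "\<bar>test_weight m R (time_cutoff_eps_d1 m R e) w\<bar>
      \<le> 48 * real m ^ 2 / R^2 + 48 * real m ^ 2 / e"
    using c1[of "snd w"] ind unfolding test_weight_def by (meson order_trans)
qed

text \<open>\<open>m\<close> is the power of the spatial cutoff in the test functions; \<open>m - 2 \<ge> m/p\<close> is what
  lets Young's inequality absorb the derivatives of \<open>\<Theta>\<^sup>m\<close> into \<open>\<Theta>\<^sup>m\<close>.\<close>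

locale nonneg_global_solution =
  fixes p :: real and u0 :: "('n::finite,'k::finite) pt \<Rightarrow> real"
    and u :: "('n,'k) pt \<Rightarrow> real \<Rightarrow> real" and m :: nat
  assumes p: "p > 1"
    and global: "global_weak_solution p u0 u"
    and nonneg: "AE w in lborel. snd w > 0 \<longrightarrow> u (fst w) (snd w) \<ge> 0"
    and m: "m \<ge> 3" "real m - 2 \<ge> real m / p"
begin

abbreviation sol :: "('n,'k) pt \<times> real \<Rightarrow> real" where
  "sol w \<equiv> u (fst w) (snd w)"

abbreviation source :: "('n,'k) pt \<times> real \<Rightarrow> real" where
  "source w \<equiv> \<bar>sol w\<bar> powr (p - 1) * sol w"

lemma weak_identity:
  assumes R: "R > 0"
    and c: "\<And>s. (c has_real_derivative c' s) (at s)" "continuous_on UNIV c'" "c (3 * R^2) = 0"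
  shows "- (c 0 * (\<integral>z. u0 z * theta R z ^ m \<partial>lborel)) =
      (\<integral>w. source w * test_weight m R c w \<partial>lborel)
      + (\<integral>w. sol w * test_grushin m R c w \<partial>lborel)
      + (\<integral>w. sol w * test_weight m R c' w \<partial>lborel)"
proof -
  have T: "3 * R^2 > 0" using R by simp
  then have "weak_solution (3 * R^2) p u0 u" using global by (simp add: global_weak_solution_def)
  then have "\<forall>\<phi>. test_fun (3 * R^2) \<phi> \<longrightarrow>
        - (\<integral>z. u0 z * \<phi> z 0 \<partial>lborel)
        = (LINT w : UNIV \<times> {0<..<3 * R^2} | lborel. source w * \<phi> (fst w) (snd w))
        + (LINT w : UNIV \<times> {0<..<3 * R^2} | lborel. sol w
            * grushin (\<lambda>z. \<phi> z (snd w)) (fst w))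
        + (LINT w : UNIV \<times> {0<..<3 * R^2} | lborel. sol w * dtime (3 * R^2) \<phi> (fst w) (snd w))"
    unfolding weak_solution_def by blast
  from this[rule_format, OF test_fun_test_phi[OF m(1) R c]]
  have id: "- (\<integral>z. u0 z * test_phi m R c z 0 \<partial>lborel)
        = (LINT w : slab (3 * R^2) | lborel. source w * test_phi m R c (fst w) (snd w))
        + (LINT w : slab (3 * R^2) | lborel. sol w * grushin (\<lambda>z. test_phi m R c z (snd w)) (fst w))
        + (LINT w : slab (3 * R^2) | lborel. sol w * dtime (3 * R^2) (test_phi m R c) (fst w) (snd w))"
    by (simp add: slab_def)
  have "(LINT w : slab (3 * R^2) | lborel. source w * test_phi m R c (fst w) (snd w))
      = (\<integral>w. source w * test_weight m R c w \<partial>lborel)"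
    unfolding set_lebesgue_integral_def
    by (intro Bochner_Integration.integral_cong refl) (simp add: test_phi_def test_weight_def)
  moreover have "(LINT w : slab (3 * R^2) | lborel. sol w
      * grushin (\<lambda>z. test_phi m R c z (snd w)) (fst w))
      = (\<integral>w. sol w * test_grushin m R c w \<partial>lborel)"
    unfolding set_lebesgue_integral_def
    by (intro Bochner_Integration.integral_cong refl) (simp add: test_grushin_def)
  moreover have "(LINT w : slab (3 * R^2) | lborel. sol w * dtime (3 * R^2) (test_phi m R c) (fst w) (snd w))
      = (\<integral>w. sol w * test_weight m R c' w \<partial>lborel)"
    unfolding set_lebesgue_integral_def
    by (intro Bochner_Integration.integral_cong refl)
       (auto simp: test_weight_def indicator_def mem_slab dtime_test_phi[OF c(1) T])
  moreover have "(\<integral>z. u0 z * test_phi m R c z 0 \<partial>lborel)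
      = c 0 * (\<integral>z. u0 z * theta R z ^ m \<partial>lborel)"
    by (simp add: test_phi_def mult.left_commute)
  ultimately show ?thesis using id by simp
qed

lemma source_eq_powr:
  "AE w in lborel. snd w > 0 \<longrightarrow> sol w \<ge> 0 \<and> source w = sol w powr p"
  using nonneg
proof (rule AE_mp[OF _ AE_I2], intro impI)
  fix w :: "('n,'k) pt \<times> real"
  assume "snd w > 0 \<longrightarrow> sol w \<ge> 0" "snd w > 0"
  then have u: "sol w \<ge> 0" by auto
  moreover have "source w = sol w powr p"
  proof (cases "sol w = 0")
    case False
    then have pos: "sol w > 0" using u by simp
    have "sol w powr p = sol w powr ((p - 1) + 1)" by simp
    also have "\<dots> = sol w powr (p - 1) * sol w"
      using pos by (simp only: powr_add powr_one_gt_zero_iff) simp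
    finally show ?thesis using pos by simp
  qed simp
  ultimately show "sol w \<ge> 0 \<and> source w = sol w powr p" by simp
qed

lemma integrable_mult_st_box:
  assumes R: "R > 0" and e: "e > 0" and g: "g \<in> borel_measurable lborel"
    and gC: "\<And>w. \<bar>g w\<bar> \<le> C"
    and g0: "\<And>w. \<not> (w \<in> st_box (2 * R) (2 * R^2) \<and> e \<le> snd w) \<Longrightarrow> g w = 0"
  shows "integrable lborel (\<lambda>w. sol w * g w)" and "integrable lborel (\<lambda>w. source w * g w)"
proof -
  define K :: "(('n,'k) pt \<times> real) set" where "K
      = st_box (2 * R) (2 * R^2) \<inter> (UNIV \<times> {e..})"
  have K: "compact K" unfolding K_def
    by (intro compact_Int_closed compact_st_box closed_Times) auto
  have "K \<subseteq> slab (3 * R^2)"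
    using e R by (auto simp: K_def mem_st_box mem_slab)
  moreover have "weak_solution (3 * R^2) p u0 u"
    using global R by (simp add: global_weak_solution_def)
  ultimately have L1: "L1_loc K (\<lambda>(z, t). u z t)"
      "L1_loc K (\<lambda>(z, t). \<bar>u z t\<bar> powr (p - 1) * u z t)"
    unfolding weak_solution_def L1_loc_def slab_def by auto
  have g0': "g w = 0" if "w \<notin> K" for w
    using g0[of w] that by (auto simp: K_def mem_Times_iff)
  show "integrable lborel (\<lambda>w. sol w * g w)"
    using L1_loc_integrable_mult[OF L1(1) K order_refl g gC g0'] by (simp add: case_prod_beta)
  show "integrable lborel (\<lambda>w. source w * g w)"
    using L1_loc_integrable_mult[OF L1(2) K order_refl g gC g0'] by (simp add: case_prod_beta)
qed

lemma AE_source_test_weight_nonneg: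
  assumes "\<And>t. 0 \<le> c t"
  shows "AE w in lborel. 0 \<le> source w * test_weight m R c w"
  using source_eq_powr
proof (rule AE_mp[OF _ AE_I2], intro impI)
  fix w :: "('n,'k) pt \<times> real"
  assume "0 < snd w \<longrightarrow> 0 \<le> sol w \<and> source w = sol w powr p"
  moreover have "0 \<le> test_weight m R c w"
    by (rule test_weight_nonneg[OF assms])
  moreover have "test_weight m R c w = 0" if "snd w \<le> 0"
    using that by (simp add: test_weight_def mem_slab)
  ultimately show "0 \<le> source w * test_weight m R c w" by force
qed

lemma source_test_bound:
  assumes R: "R > 0" and e: "e > 0"
  defines "C \<equiv> 2 powr (1 / (p - 1)) * (2 * (test_const m CARD('n) CARD('k) / R^2)) powr (p / (p - 1))"
  shows "integrable lborel (\<lambda>w. source w * test_weight m R (time_cutoff_eps m R e) w)"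
    and "(\<integral>w. source w * test_weight m R (time_cutoff_eps m R e) w \<partial>lborel)
           \<le> 2 * C * measure lborel (st_box (2 * R) (2 * R^2) :: (('n,'k) pt \<times> real) set)"
proof -
  let ?c = "time_cutoff_eps m R e" and ?c' = "time_cutoff_eps_d1 m R e"
  let ?box = "st_box (2 * R) (2 * R^2) :: (('n,'k) pt \<times> real) set"
  let ?F1 = "\<lambda>w. source w * test_weight m R ?c w"
  let ?F2 = "\<lambda>w. sol w * test_grushin m R ?c w"
  let ?F3 = "\<lambda>w. sol w * test_weight m R ?c' w"
  have C: "C \<ge> 0" by (simp add: C_def)
  note cont = continuous_on_time_cutoff_eps[OF R e]
    and deriv = time_cutoff_eps_has_derivative[OF m(1) R e]
  have "?c (3 * R^2) = 0" "?c 0 = 0"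
    using time_cutoff_end[OF m(1) R] initial_cutoff_eq_0[OF m(1), of 0 e] e
      by (simp_all add: time_cutoff_eps_def)
  then have id: "0 = integral\<^sup>L lborel ?F1 + integral\<^sup>L lborel ?F2 + integral\<^sup>L lborel ?F3"
    using weak_identity[OF R deriv cont(2)] by simp
  note vanish = eps_integrands_vanish[OF m(1) R e] and bounded = eps_integrands_bounded[OF m(1) R e]
  have int1: "integrable lborel ?F1"
    by (rule integrable_mult_st_box(2)[OF R e test_weight_measurable[OF R cont(1)] bounded(1) vanish(1)])
  have int2: "integrable lborel ?F2"
    by (rule integrable_mult_st_box(1)[OF R e test_grushin_measurable[OF m(1) R cont(1)] bounded(2) vanish(2)])
  have int3: "integrable lborel ?F3"
    by (rule integrable_mult_st_box(1)[OF R e test_weight_measurable[OF R cont(2)] bounded(3) vanish(3)])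
  have intB: "integrable lborel (\<lambda>w. indicator ?box w :: real)"
    using emeasure_compact_finite[OF compact_st_box]
    by (intro integrable_real_indicator[OF st_box_sets]) (simp add: less_top)
  have pw: "AE w in lborel. - (?F2 w + ?F3 w) \<le> 1/2 * ?F1 w + C * indicator ?box w"
    using source_eq_powr
  proof (rule AE_mp[OF _ AE_I2], intro impI)
    fix w :: "('n,'k) pt \<times> real"
    assume h: "0 < snd w \<longrightarrow> 0 \<le> sol w \<and> source w = sol w powr p"
    show "- (?F2 w + ?F3 w) \<le> 1/2 * ?F1 w + C * indicator ?box w"
    proof (cases "w \<in> slab (3 * R^2)")
      case True
      then have "0 < snd w" by (simp add: mem_slab)
      with h have "0 \<le> sol w" "source w = sol w powr p" by auto
      with eps_pointwise_bound[OF p m R e \<open>0 < snd w\<close> \<open>0 \<le> sol w\<close>]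
          True show ?thesis
        by (simp add: test_weight_def test_grushin_def C_def)
    qed (use C in \<open>simp add: test_weight_def test_grushin_def\<close>)
  qed
  have "- (integral\<^sup>L lborel ?F2 + integral\<^sup>L lborel ?F3)
      = integral\<^sup>L lborel (\<lambda>w. - (?F2 w + ?F3 w))"
    using int2 int3 by simp
  also have "\<dots> \<le> integral\<^sup>L lborel (\<lambda>w. 1/2 * ?F1 w + C * indicator ?box w)"
    using int1 int2 int3 intB pw by (intro integral_mono_AE) auto
  also have "\<dots> = 1/2 * integral\<^sup>L lborel ?F1 + C * measure lborel ?box"
    using int1 intB by simp
  finally show "integral\<^sup>L lborel ?F1 \<le> 2 * C * measure lborel ?box"
    using id by linarith
  show "integrable lborel ?F1" by (rule int1)
qed

lemma main_integrands_bound: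
  assumes R: "R > 0" and \<delta>: "\<delta> > 0"
  defines "B \<equiv> \<lambda>w. \<delta>
      * (indicator {w. 0 < snd w} w * source w * indicator (- st_box R (R^2)) w)
    + \<delta> powr (- 1 / (p - 1)) * (test_const m CARD('n) CARD('k) / R^2) powr (p / (p - 1))
      * indicator (st_box (2 * R) (2 * R^2)) w"
  shows "AE w in lborel. \<bar>sol w * test_grushin m R (time_cutoff m R) w\<bar> \<le> B w
      \<and> \<bar>sol w * test_weight m R (time_cutoff_d1 m R) w\<bar> \<le> B w"
  using source_eq_powr
proof (rule AE_mp[OF _ AE_I2], intro impI)
  fix w :: "('n,'k) pt \<times> real"
  assume h: "0 < snd w \<longrightarrow> 0 \<le> sol w \<and> source w = sol w powr p"
  show "\<bar>sol w * test_grushin m R (time_cutoff m R) w\<bar> \<le> B w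
      \<and> \<bar>sol w * test_weight m R (time_cutoff_d1 m R) w\<bar> \<le> B w"
  proof (cases "w \<in> slab (3 * R^2)")
    case True
    then have t: "0 < snd w" by (simp add: mem_slab)
    with h have "0 \<le> sol w" "source w = sol w powr p" by auto
    with main_pointwise_bound[OF p m R \<delta> \<open>0 \<le> sol w\<close>, of w] True t show ?thesis
      by (simp add: test_weight_def test_grushin_def B_def)
  next
    case False
    have "0 \<le> indicator {w. 0 < snd w} w * source w" using h by (simp add: indicator_def)
    then have "0 \<le> B w" using \<delta> by (simp add: B_def)
    then show ?thesis using False by (simp add: test_weight_def test_grushin_def)
  qed
qed

end

locale subcritical_solution = nonneg_global_solution p u0 u m
  for p :: real and u0 :: "('n::finite,'k::finite) pt \<Rightarrow> real" and u m +
  assumes subcritical: "real CARD('n) + 2 * real CARD('k) + 2 \<le> 2 * (p / (p - 1))"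
begin

lemma integrable_source: "integrable lborel (\<lambda>w. indicator {w. 0 < snd w} w * source w)"
proof -
  define X where "X = 2 * test_const m CARD('n) CARD('k)"
  define f where "f n w
      = source w * test_weight m (real n + 1) (time_cutoff_eps m (real n + 1) (1 / (real n + 1))) w"
    for n w
  show ?thesis
  proof (rule integrable_limit_bounded_integrals[where f = f])
    fix n
    have R: "real n + 1 > 0" "real n + 1 \<ge> 1" and e: "1 / (real n + 1) > 0" by auto
    note bound = source_test_bound[OF R(1) e]
    show "integrable lborel (f n)"
      using bound(1) by (simp add: f_def[abs_def])
    have "integral\<^sup>L lborel (f n)
        \<le> 2 * 2 powr (1 / (p - 1)) * ((X / (real n + 1)^2) powr (p / (p - 1))
        * measure lborel (st_box (2 * (real n + 1)) (2 * (real n + 1)^2) :: (('n,'k) pt \<times> real) set))"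
      using bound(2) by (simp add: f_def[abs_def] X_def ac_simps)
    also have "\<dots> \<le> 2 * 2 powr (1 / (p - 1)) * (X powr (p / (p - 1)) * 4 ^ (CARD('n) + CARD('k) + 1))"
      using test_const_nonneg by (intro mult_left_mono scaled_measure_st_box_le[OF R(2) _ subcritical])
        (auto simp: X_def)
    finally show "integral\<^sup>L lborel (f n)
        \<le> 2 * 2 powr (1 / (p - 1)) * (X powr (p / (p - 1)) * 4 ^ (CARD('n) + CARD('k) + 1))" .
    show "AE w in lborel. 0 \<le> f n w"
      unfolding f_def by (intro AE_source_test_weight_nonneg time_cutoff_eps_nonneg)
  next
    fix w :: "('n,'k) pt \<times> real"
    show "(\<lambda>n. f n w) \<longlonglongrightarrow> indicator {w. 0 < snd w} w * source w"
    proof (cases "snd w > 0")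
      case True
      have "\<forall>\<^sub>F n in sequentially. f n w = indicator {w. 0 < snd w} w * source w"
      proof (rule eventually_mono[OF eventually_mem_st_box[OF True]])
        fix n assume "w \<in> st_box (real n + 1) ((real n + 1)^2) \<and> 2 * (1 / (real n + 1)) \<le> snd w"
        then have "test_weight m (real n + 1) (time_cutoff_eps m (real n + 1) (1 / (real n + 1))) w = 1"
          by (intro test_weight_time_cutoff_eps_eq_1[OF m(1)]) auto
        then show "f n w = indicator {w. 0 < snd w} w * source w" using True by (simp add: f_def)
      qed
      then show ?thesis by (rule tendsto_eventually)
    qed (simp add: f_def test_weight_def mem_slab)
  qed
qed

text \<open>Since \<open>\<Delta>\<^sub>G \<phi>\<close> and \<open>\<phi>\<^sub>t\<close> vanish on \<open>st_box R (R^2)\<close>, only the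
  source outside that box is charged.\<close>

lemma initial_mass_bound:
  assumes R: "R > 0" and \<delta>: "\<delta> > 0"
  shows "(\<integral>z. u0 z * theta R z ^ m \<partial>lborel) \<le>
    2 * (\<delta>
        * (\<integral>w. indicator {w. 0 < snd w} w * source w
        * indicator (- st_box R (R^2)) w \<partial>lborel)
      + \<delta> powr (- 1 / (p - 1)) * (test_const m CARD('n) CARD('k) / R^2) powr (p / (p - 1))
        * measure lborel (st_box (2 * R) (2 * R^2) :: (('n,'k) pt \<times> real) set))"
proof -
  let ?V = "\<lambda>w. indicator {w. 0 < snd w} w * source w"
  let ?box = "st_box (2 * R) (2 * R^2) :: (('n,'k) pt \<times> real) set"
  define K where "K = \<delta> powr (- 1 / (p - 1)) * (test_const m CARD('n) CARD('k) / R^2) powr (p / (p - 1))"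
  define B where "B = (\<lambda>w. \<delta> * (?V w * indicator (- st_box R (R^2)) w) + K * indicator ?box w)"
  have "integrable lborel (\<lambda>w. indicator (- st_box R (R^2)) w *\<^sub>R ?V w)"
    by (intro integrable_mult_indicator integrable_source st_box_compl_sets)
  then have intV: "integrable lborel (\<lambda>w. ?V w * indicator (- st_box R (R^2)) w)"
    by (simp add: mult.commute)
  have intBox: "integrable lborel (\<lambda>w. indicator ?box w :: real)"
    using emeasure_compact_finite[OF compact_st_box]
    by (intro integrable_real_indicator[OF st_box_sets]) (simp add: less_top)
  have intB: "integrable lborel B"
    using intV intBox unfolding B_def by simp
  have "time_cutoff m R 0 = 1" using time_cutoff_eq_1[OF m(1) _ R, of 0] by simp
  then have id: "- (\<integral>z. u0 z * theta R z ^ m \<partial>lborel) =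
      (\<integral>w. source w * test_weight m R (time_cutoff m R) w \<partial>lborel)
      + (\<integral>w. sol w * test_grushin m R (time_cutoff m R) w \<partial>lborel)
      + (\<integral>w. sol w * test_weight m R (time_cutoff_d1 m R) w \<partial>lborel)"
    using weak_identity[OF R time_cutoff_has_derivative[OF m(1) R] continuous_on_time_cutoff_d1[OF R]
        time_cutoff_end[OF m(1) R]] by simp
  have "0 \<le> (\<integral>w. source w * test_weight m R (time_cutoff m R) w \<partial>lborel)"
    by (intro integral_nonneg_AE AE_source_test_weight_nonneg time_cutoff_bounds)
  moreover have "AE w in lborel. \<bar>sol w * test_grushin m R (time_cutoff m R) w\<bar> \<le> B w
      \<and> \<bar>sol w * test_weight m R (time_cutoff_d1 m R) w\<bar> \<le> B w"
    using main_integrands_bound[OF R \<delta>] by (simp add: B_def K_def)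
  then have "- (\<integral>w. sol w * test_grushin m R (time_cutoff m R) w \<partial>lborel)
      \<le> integral\<^sup>L lborel B"
    "- (\<integral>w. sol w * test_weight m R (time_cutoff_d1 m R) w \<partial>lborel)
        \<le> integral\<^sup>L lborel B"
    by (auto intro!: neg_integral_le_of_abs_le[OF intB] elim: eventually_mono)
  ultimately have "(\<integral>z. u0 z * theta R z ^ m \<partial>lborel) \<le> 2 * integral\<^sup>L lborel B"
    using id by linarith
  also have "integral\<^sup>L lborel B
      = \<delta> * (\<integral>w. ?V w * indicator (- st_box R (R^2)) w \<partial>lborel)
      + K * measure lborel ?box"
    using intV intBox unfolding B_def by simp
  finally show ?thesis by (simp add: K_def)
qed

lemma initial_mass_le:
  assumes u0: "integrable lborel u0" and \<delta>: "\<delta> > 0"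
  shows "(\<integral>z. u0 z \<partial>lborel) \<le> 2 * \<delta> powr (- 1 / (p - 1))
           * (test_const m CARD('n) CARD('k) powr (p / (p - 1)) * 4 ^ (CARD('n) + CARD('k) + 1))"
proof -
  define K where "K = test_const m CARD('n) CARD('k) powr (p / (p - 1)) * 4 ^ (CARD('n) + CARD('k) + 1)"
  define E where "E n = (\<integral>w. indicator {w. 0 < snd w} w * source w
      * indicator (- st_box (real n + 1) ((real n + 1)^2)) w \<partial>lborel)" for n
  have bound: "(\<integral>z. u0 z * theta (real n + 1) z ^ m \<partial>lborel)
      \<le> 2 * \<delta> * E n + 2 * \<delta> powr (- 1 / (p - 1)) * K"
    for n
  proof -
    have "(test_const m CARD('n) CARD('k) / (real n + 1)^2) powr (p / (p - 1))
        * measure lborel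
            (st_box (2 * (real n + 1)) (2 * (real n + 1)^2) :: (('n,'k) pt \<times> real) set) \<le> K"
      unfolding K_def by (intro scaled_measure_st_box_le test_const_nonneg subcritical) simp
    then have "\<delta> powr (- 1 / (p - 1))
        * (test_const m CARD('n) CARD('k) / (real n + 1)^2) powr (p / (p - 1))
        * measure lborel (st_box (2 * (real n + 1)) (2 * (real n + 1)^2) :: (('n,'k) pt \<times> real) set)
        \<le> \<delta> powr (- 1 / (p - 1)) * K"
      by (simp add: mult.assoc mult_left_mono)
    then show ?thesis
      using initial_mass_bound[OF _ \<delta>, of "real n + 1"] unfolding E_def by simp
  qed
  have "(\<lambda>n. 2 * \<delta> * E n + 2 * \<delta> powr (- 1 / (p - 1)) * K)
      \<longlonglongrightarrow> 2 * \<delta> * 0 + 2 * \<delta> powr (- 1 / (p - 1)) * K"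
    unfolding E_def by (intro tendsto_intros integral_outside_st_box_tendsto_0 integrable_source) simp
  then have lim: "(\<lambda>n. 2 * \<delta> * E n + 2 * \<delta> powr (- 1 / (p - 1)) * K)
      \<longlonglongrightarrow> 2 * \<delta> powr (- 1 / (p - 1)) * K"
    by simp
  have "(\<integral>z. u0 z \<partial>lborel) \<le> 2 * \<delta> powr (- 1 / (p - 1)) * K"
    by (rule LIMSEQ_le[OF integral_theta_power_tendsto[OF u0] lim]) (use bound in auto)
  then show ?thesis by (simp add: K_def)
qed

lemma initial_mass_nonpos:
  assumes u0: "integrable lborel u0"
  shows "(\<integral>z. u0 z \<partial>lborel) \<le> 0"
proof (rule ccontr)
  define a where "a = (\<integral>z. u0 z \<partial>lborel)"
  define K where "K = test_const m CARD('n) CARD('k) powr (p / (p - 1)) * 4 ^ (CARD('n) + CARD('k) + 1)"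
  assume "\<not> (\<integral>z. u0 z \<partial>lborel) \<le> 0"
  then have a: "a > 0" by (simp add: a_def)
  define y where "y = max 1 (4 * K / a)"
  have y: "y \<ge> 1" "4 * K / a \<le> y" by (simp_all add: y_def)
  have "(y powr (p - 1)) powr (- 1 / (p - 1)) = 1 / y"
    using y(1) p by (simp add: powr_powr powr_minus_divide)
  then have "a \<le> 2 * (1 / y) * K"
    using initial_mass_le[OF u0, of "y powr (p - 1)"] y(1) by (simp add: a_def K_def)
  also have "\<dots> \<le> a / 2"
    using y a by (simp add: field_simps)
  finally show False using a by simp
qed

end

lemma exists_cutoff_power:
  "p > 1 \<Longrightarrow> \<exists>m::nat. m \<ge> 3 \<and> real m - 2 \<ge> real m / p"
proof -
  assume p: "p > 1"
  define m where "m = nat \<lceil>2 * p / (p - 1)\<rceil> + 3"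
  have "2 * p / (p - 1) \<le> real m" unfolding m_def by linarith
  then have "2 * p \<le> real m * (p - 1)" using p by (simp add: divide_le_eq)
  then have "real m - 2 \<ge> real m / p" using p by (simp add: field_simps)
  then show ?thesis by (intro exI[of _ m]) (simp add: m_def)
qed

lemma subcritical_exponent:
  fixes p Q :: real
  assumes "Q > 0" "p > 1" "p \<le> 1 + 2 / Q"
  shows "Q + 2 \<le> 2 * (p / (p - 1))"
proof -
  have "Q * (p - 1) \<le> 2" using assms by (simp add: field_simps)
  then show ?thesis using assms(2) by (simp add: field_simps)
qed

theorem theorem1:
  fixes u0 :: "('n::finite, 'k::finite) pt \<Rightarrow> real" and p :: real
  assumes "p > 1"
    and "integrable lborel u0"
    and "(\<integral>z. u0 z \<partial>lborel) > 0"
    and "p \<le> 1 + 2 / (real CARD('n) + 2 * real CARD('k))"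
  shows "\<not> (\<exists>u. global_weak_solution p u0 u \<and>
                (AE w in lborel. snd w > 0 \<longrightarrow> u (fst w) (snd w) \<ge> 0))"
proof
  assume "\<exists>u. global_weak_solution p u0 u
      \<and> (AE w in lborel. snd w > 0 \<longrightarrow> u (fst w) (snd w) \<ge> 0)"
  then obtain u where "global_weak_solution p u0 u"
      "AE w in lborel. snd w > 0 \<longrightarrow> u (fst w) (snd w) \<ge> 0"
    by blast
  moreover obtain m :: nat where "m \<ge> 3" "real m - 2 \<ge> real m / p"
    using exists_cutoff_power[OF assms(1)] by blast
  moreover have "real CARD('n) + 2 * real CARD('k) + 2 \<le> 2 * (p / (p - 1))"
    using subcritical_exponent[OF _ assms(1,4)] by (simp add: add_pos_nonneg)
  ultimately interpret subcritical_solution p u0 u m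
    using assms(1) by unfold_locales
  show False
    using initial_mass_nonpos[OF assms(2)] assms(3) by simp
qed

end
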